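(* Let $\Delta\in\mathfrak{A}^N_0$ with $n^\Delta_{-\lambda}=n^\Delta_\lambda$ for all $\lambda\in k^*$, and let $C,C'$ be two distinct $SO_Q$-conjugacy classes contained in $R_\Delta$. If $N\equiv2\pmod4$ then $C'=-C$. If $N\equiv0\pmod4$ then $-C=C$ and $-C'=C'$.
   Context: $k$ is an algebraically closed field of odd characteristic. $V$ is a $k$-vector space of even dimension $N\ge2$ with nondegenerate quadratic form $Q$. For semisimple $s\in SO_Q$, $V^s_\lambda$ is its $\lambda$-eigenspace and $\Delta_s=\prod_{\lambda\in k^*}(X-\lambda)^{\dim V^s_\lambda}$. For monic $\Delta\in k[X]$ with $\Delta(0)\neq0$, $n^\Delta_\lambda$ is the multiplicity of $\lambda$ as a root. $\mathfrak{A}^N_0$ is the set of such $\Delta$ of degree $N$ with $n^\Delta_{\lambda^{-1}}=n^\Delta_\lambda$ for all $\lambda$ and $n^\Delta_1=n^\Delta_{-1}=0$. $R_\Delta=\{s\in SO_Q \text{ semisimple}:\Delta_s=\Delta\}$, and $-C=\{-c:c\in C\}$. *)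

theory Defs
  imports "Jordan_Normal_Form.Jordan_Normal_Form_Uniqueness"
          "HOL-Computational_Algebra.Polynomial"
begin

text \<open>The space V is modelled as k^N (vectors in carrier_vec N). A quadratic form on k^N
  is given by a matrix A via Q(v) = v . (A v).\<close>

definition qform :: "'k::field mat \<Rightarrow> 'k vec \<Rightarrow> 'k" where
  "qform A v = v \<bullet> (A *\<^sub>v v)"

definition polar_form :: "'k::field mat \<Rightarrow> 'k vec \<Rightarrow> 'k vec \<Rightarrow> 'k" where
  "polar_form A x y = qform A (x + y) - qform A x - qform A y"

definition nondegenerate_qf :: "nat \<Rightarrow> 'k::field mat \<Rightarrow> bool" where
  "nondegenerate_qf N A \<longleftrightarrow> A \<in> carrier_mat N N \<and>
     (\<forall>x\<in>carrier_vec N. (\<forall>y\<in>carrier_vec N. polar_form A x y = 0) \<longrightarrow> x = 0\<^sub>v N)"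

definition SO_Q :: "nat \<Rightarrow> 'k::field mat \<Rightarrow> 'k mat set" where
  "SO_Q N A = {g \<in> carrier_mat N N. det g = 1 \<and>
                 (\<forall>v\<in>carrier_vec N. qform A (g *\<^sub>v v) = qform A v)}"

text \<open>semisimple = diagonalizable (k algebraically closed)\<close>
definition semisimple :: "'k::field mat \<Rightarrow> bool" where
  "semisimple s \<longleftrightarrow> (\<exists>D. similar_mat s D \<and> diagonal_mat D)"

definition eigsp_dim :: "'k::field mat \<Rightarrow> 'k \<Rightarrow> nat" where
  "eigsp_dim s l = dim_gen_eigenspace s l 1"

definition Delta_of :: "'k::field mat \<Rightarrow> 'k poly" where
  "Delta_of s = (\<Prod>l\<in>{l. l \<noteq> 0 \<and> eigsp_dim s l > 0}. [:-l, 1:] ^ eigsp_dim s l)"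

definition mult_root :: "'k::field poly \<Rightarrow> 'k \<Rightarrow> nat" where
  "mult_root \<Delta> l = Polynomial.order l \<Delta>"

definition frakA0 :: "nat \<Rightarrow> 'k::field poly set" where
  "frakA0 N = {\<Delta>. monic \<Delta> \<and> poly \<Delta> 0 \<noteq> 0 \<and> degree \<Delta> = N \<and>
      (\<forall>l. l \<noteq> 0 \<longrightarrow> mult_root \<Delta> (inverse l) = mult_root \<Delta> l) \<and>
      mult_root \<Delta> 1 = 0 \<and> mult_root \<Delta> (-1) = 0}"

definition R_Delta :: "nat \<Rightarrow> 'k::field mat \<Rightarrow> 'k poly \<Rightarrow> 'k mat set" where
  "R_Delta N A \<Delta> = {s \<in> SO_Q N A. semisimple s \<and> Delta_of s = \<Delta>}"

definition conj_class :: "nat \<Rightarrow> 'k::field mat \<Rightarrow> 'k mat \<Rightarrow> 'k mat set" where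
  "conj_class N A s = {g * s * h | g h. g \<in> SO_Q N A \<and> h \<in> carrier_mat N N \<and> g * h = 1\<^sub>m N \<and> h * g = 1\<^sub>m N}"

definition is_conj_class :: "nat \<Rightarrow> 'k::field mat \<Rightarrow> 'k mat set \<Rightarrow> bool" where
  "is_conj_class N A C \<longleftrightarrow> (\<exists>s\<in>SO_Q N A. C = conj_class N A s)"

end

theory Submission
  imports Defs
begin

text \<open>
  For \<open>s \<in> R\<^sub>\<Delta>\<close> the polar form \<open>B\<close> of \<open>Q\<close> is nondegenerate and \<open>s\<close>-invariant, and \<open>s\<close> is
  diagonalizable with no eigenvalue \<open>\<plusminus>1\<close>. Hence \<open>V\<close> has a hyperbolic eigenbasis \<open>e\<^sub>i, f\<^sub>i\<close>
  (\<open>i < m = N/2\<close>): \<open>s e\<^sub>i = \<lambda>\<^sub>i e\<^sub>i\<close>, \<open>s f\<^sub>i = \<lambda>\<^sub>i\<inverse> f\<^sub>i\<close>, \<open>B(e\<^sub>i, f\<^sub>j) = \<delta>\<^sub>i\<^sub>j\<close>,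
  \<open>B(e\<^sub>i, e\<^sub>j) = B(f\<^sub>i, f\<^sub>j) = 0\<close>, where every \<open>\<lambda>\<^sub>i\<close> lies in a fixed set \<open>S\<close> containing exactly
  one of \<open>\<mu>, \<mu>\<inverse>\<close> for each \<open>\<mu> \<noteq> 0, \<plusminus>1\<close>. The multiset of the \<open>\<lambda>\<^sub>i\<close> is determined
  by \<open>\<Delta>\<close>, so two elements of \<open>R\<^sub>\<Delta>\<close> are conjugate by the isometry matching their bases; its
  determinant is the quotient of the determinants of the two basis matrices.

  As \<open>n\<^sub>-\<^sub>\<lambda> = n\<^sub>\<lambda>\<close>, also \<open>-s \<in> R\<^sub>\<Delta>\<close>, and negating a basis of \<open>s\<close> gives one of \<open>-s\<close>.
  If \<open>S\<close> is as closed under negation as possible, only the pairs with \<open>\<lambda>\<^sub>i\<^sup>2 = -1\<close> must then be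
  swapped to bring the eigenvalues back into \<open>S\<close>; the other \<open>\<lambda>\<^sub>i\<close> pair off as \<open>\<plusminus>\<lambda>\<close>, so the
  number of swaps has the parity of \<open>m\<close>, and \<open>s\<close> is conjugate to \<open>-s\<close> by an isometry of
  determinant \<open>(-1)\<^sup>m\<close>. For \<open>m\<close> even this gives \<open>-C = C\<close>. For \<open>m\<close> odd, \<open>C \<noteq> C'\<close> forces the
  isometries conjugating \<open>C\<close> to \<open>C'\<close> to have determinant \<open>-1\<close>, and composing such an isometry
  with the one conjugating \<open>C\<close> to \<open>-C\<close> gives an element of \<open>SO\<^sub>Q\<close> conjugating \<open>C'\<close> to \<open>-C\<close>.
\<close>

section \<open>The polar bilinear form\<close>

definition bform :: "'k::field mat \<Rightarrow> 'k vec \<Rightarrow> 'k vec \<Rightarrow> 'k" where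
  "bform B x y = x \<bullet> (B *\<^sub>v y)"

lemma bform_add_transpose:
  assumes A: "A \<in> carrier_mat n n" and x: "x \<in> carrier_vec n" and y: "y \<in> carrier_vec n"
  shows "bform (A + A\<^sup>T) x y = x \<bullet> (A *\<^sub>v y) + y \<bullet> (A *\<^sub>v x)"
proof -
  have "y \<bullet> (A *\<^sub>v x) = x \<bullet> (A\<^sup>T *\<^sub>v y)"
    using transpose_vec_mult_scalar[OF A x y] comm_scalar_prod[of x n "A\<^sup>T *\<^sub>v y"] A x y by auto
  then show ?thesis
    unfolding bform_def using A x y
    by (simp add: add_mult_distrib_mat_vec[of A n n "A\<^sup>T"] scalar_prod_add_distrib[of x n])
qed

lemma polar_form_eq_bform:
  assumes A: "A \<in> carrier_mat n n" and x: "x \<in> carrier_vec n" and y: "y \<in> carrier_vec n"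
  shows "polar_form A x y = bform (A + A\<^sup>T) x y"
  using A x y unfolding polar_form_def qform_def bform_add_transpose[OF A x y]
  by (simp add: mult_add_distrib_mat_vec add_scalar_prod_distrib scalar_prod_add_distrib)

lemma bform_add_transpose_diag:
  assumes A: "A \<in> carrier_mat n n" and v: "v \<in> carrier_vec n"
  shows "bform (A + A\<^sup>T) v v = 2 * qform A v"
  unfolding bform_add_transpose[OF A v v] qform_def by (simp only: mult_2)

lemma qform_uminus:
  assumes A: "A \<in> carrier_mat n n" and v: "v \<in> carrier_vec n"
  shows "qform A (- v) = qform A v"
proof -
  have "A *\<^sub>v (- v) = - (A *\<^sub>v v)"
    using A v by (intro eq_vecI) (auto simp: scalar_prod_uminus_right)
  then show ?thesis using A v unfolding qform_def by simp
qed

lemma bform_sym: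
  assumes B: "B \<in> carrier_mat n n" and BT: "B\<^sup>T = B" and x: "x \<in> carrier_vec n" and y: "y \<in> carrier_vec n"
  shows "bform B x y = bform B y x"
  unfolding bform_def
  using transpose_vec_mult_scalar[OF B y x] comm_scalar_prod[of x n "B *\<^sub>v y"] comm_scalar_prod[of y n "B *\<^sub>v x"]
    B x y BT by auto

lemma bform_smult_left:
  assumes B: "B \<in> carrier_mat n n" and x: "x \<in> carrier_vec n" and y: "y \<in> carrier_vec n"
  shows "bform B (c \<cdot>\<^sub>v x) y = c * bform B x y"
  unfolding bform_def using B x y by (simp add: smult_scalar_prod_distrib[of x n])

lemma bform_smult_right:
  assumes B: "B \<in> carrier_mat n n" and x: "x \<in> carrier_vec n" and y: "y \<in> carrier_vec n"
  shows "bform B x (c \<cdot>\<^sub>v y) = c * bform B x y"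
  unfolding bform_def using B x y by (simp add: mult_mat_vec[OF B y] scalar_prod_smult_distrib[of x n])

lemma bform_eq_sum:
  assumes B: "B \<in> carrier_mat n n" and y: "y \<in> carrier_vec n"
  shows "bform B x y = (\<Sum>a<n. x $ a * (B *\<^sub>v y) $ a)"
  unfolding bform_def scalar_prod_def using B y by (simp add: atLeast0LessThan)

lemma mult_mat_vec_nth_eq_sum:
  assumes s: "s \<in> carrier_mat n n" and x: "x \<in> carrier_vec n" and a: "a < n"
  shows "(s *\<^sub>v x) $ a = (\<Sum>b<n. s $$ (a,b) * x $ b)"
  using s x a by (simp add: scalar_prod_def atLeast0LessThan)

lemma bform_lincomb_left:
  assumes B: "B \<in> carrier_mat n n" and y: "y \<in> carrier_vec n"
  shows "bform B (vec n (\<lambda>a. \<Sum>j<k. c j * w j $ a)) y = (\<Sum>j<k. c j * bform B (w j) y)"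
  unfolding bform_eq_sum[OF B y]
  by (simp add: sum_distrib_left sum_distrib_right mult.assoc sum.swap[of _ "{..<k}"])

lemma bform_lincomb_right:
  assumes B: "B \<in> carrier_mat n n" and BT: "B\<^sup>T = B" and x: "x \<in> carrier_vec n"
    and w: "\<And>j. j < k \<Longrightarrow> w j \<in> carrier_vec n"
  shows "bform B x (vec n (\<lambda>a. \<Sum>j<k. c j * w j $ a)) = (\<Sum>j<k. c j * bform B x (w j))"
  using bform_sym[OF B BT x] w bform_lincomb_left[OF B x]
  by (simp add: vec_carrier)

lemma bform_diff_lincomb_left:
  assumes B: "B \<in> carrier_mat n n" and y: "y \<in> carrier_vec n"
  shows "bform B (vec n (\<lambda>a. v$a - (\<Sum>i<k. c i * e i $ a + d i * f i $ a))) y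
       = bform B v y - (\<Sum>i<k. c i * bform B (e i) y + d i * bform B (f i) y)"
proof -
  have "bform B (vec n (\<lambda>a. v$a - (\<Sum>i<k. c i * e i $ a + d i * f i $ a))) y
     = (\<Sum>a<n. v$a * (B *\<^sub>v y) $ a) - (\<Sum>i<k. c i * (\<Sum>a<n. e i $ a * (B *\<^sub>v y) $ a)
       + d i * (\<Sum>a<n. f i $ a * (B *\<^sub>v y) $ a))"
    unfolding bform_eq_sum[OF B y]
    by (simp add: left_diff_distrib sum_subtractf sum_distrib_left sum_distrib_right sum.distrib
        distrib_right mult.assoc sum.swap[of _ "{..<k}"])
  also have "\<dots> = bform B v y - (\<Sum>i<k. c i * bform B (e i) y + d i * bform B (f i) y)"
    using bform_eq_sum[OF B y] by simp
  finally show ?thesis .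
qed

lemma mult_mat_vec_diff_lincomb:
  fixes s :: "'k::field mat"
  assumes s: "s \<in> carrier_mat n n" and v: "v \<in> carrier_vec n"
    and ef: "\<And>i. i < k \<Longrightarrow> e i \<in> carrier_vec n \<and> f i \<in> carrier_vec n"
  shows "s *\<^sub>v (vec n (\<lambda>a. v$a - (\<Sum>i<k. c i * e i $ a + d i * f i $ a)))
       = vec n (\<lambda>a. (s *\<^sub>v v)$a - (\<Sum>i<k. c i * (s *\<^sub>v e i) $ a + d i * (s *\<^sub>v f i) $ a))"
proof (rule eq_vecI)
  fix a assume "a < dim_vec (vec n (\<lambda>a. (s *\<^sub>v v)$a - (\<Sum>i<k. c i * (s *\<^sub>v e i) $ a + d i * (s *\<^sub>v f i) $ a)))"
  then have a: "a < n" by simp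
  have "(s *\<^sub>v (vec n (\<lambda>a. v$a - (\<Sum>i<k. c i * e i $ a + d i * f i $ a)))) $ a
     = (\<Sum>b<n. s $$ (a,b) * v $ b) - (\<Sum>i<k. c i * (\<Sum>b<n. s $$ (a,b) * e i $ b)
       + d i * (\<Sum>b<n. s $$ (a,b) * f i $ b))"
    by (subst mult_mat_vec_nth_eq_sum[OF s _ a])
      (simp_all add: right_diff_distrib sum_subtractf sum_distrib_left sum.distrib algebra_simps
        sum.swap[of _ "{..<k}"])
  also have "\<dots> = (s *\<^sub>v v)$a - (\<Sum>i<k. c i * (s *\<^sub>v e i) $ a + d i * (s *\<^sub>v f i) $ a)"
    using mult_mat_vec_nth_eq_sum[OF s _ a] v ef by simp
  finally show "(s *\<^sub>v (vec n (\<lambda>a. v$a - (\<Sum>i<k. c i * e i $ a + d i * f i $ a)))) $ a =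
    vec n (\<lambda>a. (s *\<^sub>v v)$a - (\<Sum>i<k. c i * (s *\<^sub>v e i) $ a + d i * (s *\<^sub>v f i) $ a)) $ a"
    using a by simp
qed (use s in auto)

lemma bform_mult_mat_vec:
  assumes B: "B \<in> carrier_mat n n" and g: "g \<in> carrier_mat n n"
    and x: "x \<in> carrier_vec n" and y: "y \<in> carrier_vec n"
  shows "bform B (g *\<^sub>v x) (g *\<^sub>v y) = bform (g\<^sup>T * B * g) x y"
proof -
  have "bform B (g *\<^sub>v x) (g *\<^sub>v y) = x \<bullet> (g\<^sup>T *\<^sub>v (B *\<^sub>v (g *\<^sub>v y)))"
    unfolding bform_def using transpose_vec_mult_scalar[OF g x, of "B *\<^sub>v (g *\<^sub>v y)"] B g x y
    by (simp add: comm_scalar_prod[of _ n])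
  also have "g\<^sup>T *\<^sub>v (B *\<^sub>v (g *\<^sub>v y)) = (g\<^sup>T * B * g) *\<^sub>v y"
    using B g y by (simp add: assoc_mult_mat_vec[of _ n n _ n])
  finally show ?thesis unfolding bform_def .
qed

section \<open>Eigenspaces of diagonalizable matrices\<close>

lemma jordan_matrix_of_eigenvalues:
  "jordan_matrix (map (\<lambda>x. (1::nat, x)) ds) = mat_diag (length ds) (\<lambda>i. ds ! i)"
proof (induct ds)
  case Nil
  show ?case unfolding jordan_matrix_def mat_diag_def by (intro eq_matI, auto)
next
  case (Cons x ds)
  have "jordan_matrix (map (\<lambda>x. (1::nat, x)) (x # ds)) =
    four_block_mat (jordan_block 1 x) (0\<^sub>m 1 (length ds)) (0\<^sub>m (length ds) 1)
      (jordan_matrix (map (\<lambda>x. (1::nat, x)) ds))"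
    using Cons unfolding jordan_matrix_def by (simp add: Let_def mat_diag_def)
  then show ?case unfolding Cons
    by (intro eq_matI, auto simp: four_block_mat_def mat_diag_def nth_Cons')
qed

lemma eigsp_dim_mat_diag: "eigsp_dim (mat_diag n d) mu = card {j. j < n \<and> d j = mu}"
proof -
  let ?ds = "map d [0..<n]"
  have "mat_diag n d = jordan_matrix (map (\<lambda>x. (1::nat, x)) ?ds)"
    unfolding jordan_matrix_of_eigenvalues by (intro eq_matI, auto simp: mat_diag_def)
  then have "eigsp_dim (mat_diag n d) mu = (\<Sum>k\<leftarrow>map fst [(k, e)\<leftarrow>map (\<lambda>x. (1::nat, x)) ?ds . e = mu]. min 1 k)"
    unfolding eigsp_dim_def by (simp only: dim_gen_eigenspace_jordan_matrix)
  also have "\<dots> = length (filter (\<lambda>j. d j = mu) [0..<n])"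
    by (induct n, auto)
  also have "\<dots> = card {j. j < n \<and> d j = mu}"
    by (simp add: length_filter_conv_card, rule arg_cong[of _ _ card], auto)
  finally show ?thesis .
qed

lemma eigsp_dim_similar_mat_diag:
  "similar_mat s (mat_diag n d) \<Longrightarrow> eigsp_dim s mu = card {j. j < n \<and> d j = mu}"
  unfolding eigsp_dim_def dim_gen_eigenspace_similar[of s] eigsp_dim_mat_diag[unfolded eigsp_dim_def] ..

lemma semisimple_similar_mat_diag:
  assumes "semisimple s" and "s \<in> carrier_mat n n"
  obtains d where "similar_mat s (mat_diag n (d :: nat \<Rightarrow> 'k::field))"
proof -
  obtain D where sim: "similar_mat s D" and D: "diagonal_mat D"
    using assms(1) unfolding semisimple_def by blast
  have "D \<in> carrier_mat n n" using similar_matD[OF sim] assms(2) by auto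
  then have "D = mat_diag n (\<lambda>j. D $$ (j,j))"
    using D unfolding diagonal_mat_def mat_diag_def by (intro eq_matI, auto)
  then show ?thesis using sim that by metis
qed

lemma similar_mat_diag_uminus:
  fixes s :: "'k::comm_ring_1 mat"
  assumes "similar_mat s (mat_diag n d)"
  shows "similar_mat (- s) (mat_diag n (\<lambda>j. - d j))"
proof -
  have "similar_mat ((-1) \<cdot>\<^sub>m s) ((-1) \<cdot>\<^sub>m mat_diag n d)" by (rule similar_mat_smult[OF assms])
  moreover have "(-1) \<cdot>\<^sub>m s = - s" by (intro eq_matI) auto
  moreover have "(-1) \<cdot>\<^sub>m mat_diag n d = mat_diag n (\<lambda>j. - d j)"
    by (intro eq_matI) (auto simp: mat_diag_def)
  ultimately show ?thesis by simp
qed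

lemma det_mat_diag: "det (mat_diag n (d :: nat \<Rightarrow> 'k::comm_ring_1)) = (\<Prod>j<n. d j)"
proof -
  have "upper_triangular (mat_diag n d)" unfolding upper_triangular_def mat_diag_def by auto
  then have "det (mat_diag n d) = prod_list (diag_mat (mat_diag n d))"
    by (rule det_upper_triangular[OF _ mat_diag_dim])
  also have "diag_mat (mat_diag n d) = map d [0..<n]"
    unfolding diag_mat_def mat_diag_def by (intro nth_equalityI) auto
  finally show ?thesis by (simp add: prod.list_conv_set_nth atLeast0LessThan)
qed

lemma order_prod_linear_factors:
  assumes "finite L"
  shows "Polynomial.order mu (\<Prod>l\<in>L. [:-l, 1:] ^ e l) = (if mu \<in> L then e mu else 0)"
  using assms
proof (induct L rule: finite_induct)
  case empty
  show ?case by (simp add: order_0I)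
next
  case (insert x F)
  have "(\<Prod>l\<in>F. [:-l, 1:] ^ e l) \<noteq> 0" by (simp add: prod_zero_iff insert)
  moreover have "Polynomial.order mu ([:-x, 1:] ^ e x) = (if mu = x then e x else 0)"
    by (cases "mu = x") (simp_all add: order_power_n_n order_0I poly_power)
  ultimately show ?case
    using insert by (simp add: order_mult)
qed

text \<open>The degree hypothesis excludes the junk case of infinitely many eigenvalues, where the
  product defining \<open>Delta_of s\<close> is \<open>1\<close>.\<close>

lemma mult_root_Delta_of:
  assumes "degree (Delta_of s) \<noteq> 0" and "mu \<noteq> 0"
  shows "mult_root (Delta_of s) mu = eigsp_dim s mu"
proof -
  let ?L = "{l. l \<noteq> 0 \<and> eigsp_dim s l > 0}"
  have "finite ?L"
    using assms(1) unfolding Delta_of_def by (metis degree_1 prod.infinite)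
  then show ?thesis
    unfolding mult_root_def Delta_of_def order_prod_linear_factors[OF \<open>finite ?L\<close>] using assms(2) by auto
qed

section \<open>Transversals of the pairs \<open>{\<mu>, \<mu>\<inverse>}\<close>\<close>

lemma two_neq_zero_if_odd_char:
  assumes "odd CHAR('k::field)"
  shows "(2::'k) \<noteq> 0"
proof
  assume "(2::'k) = 0"
  then have "CHAR('k) dvd 2" by (metis of_nat_eq_0_iff_char_dvd of_nat_numeral)
  with assms have "CHAR('k) = 1"
    by (metis dvd_antisym even_numeral nat_dvd_1_iff_1 prime_nat_iff two_is_prime_nat)
  then show False by (metis of_nat_1 of_nat_eq_0_iff_char_dvd one_dvd one_neq_zero)
qed

lemma neq_uminus_self:
  assumes "(2::'k::field) \<noteq> 0" and "(x::'k) \<noteq> 0"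
  shows "x \<noteq> - x"
proof
  assume "x = - x"
  then have "2 * x = 0" by (metis add.right_inverse mult_2)
  with assms show False by simp
qed

lemma inverse_notin_trivial:
  "(l::'k::field) \<notin> {0, 1, -1} \<Longrightarrow> inverse l \<notin> {0, 1, -1}"
proof -
  assume l: "l \<notin> {0, 1, -1}"
  have "inverse l \<noteq> -1"
  proof
    assume "inverse l = -1"
    then have "l = inverse (-1)" by (metis inverse_inverse_eq)
    with l show False by simp
  qed
  with l show ?thesis by auto
qed

lemma inverse_neq_self: "(mu::'k::field) \<notin> {0, 1, -1} \<Longrightarrow> inverse mu \<noteq> mu"
proof
  assume mu: "mu \<notin> {0, 1, -1}" and "inverse mu = mu"
  then have "mu * mu = 1" by (metis insertCI right_inverse)
  with mu show False by (simp add: square_eq_1_iff)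
qed

lemma inverse_eq_uminus_iff: "(mu::'k::field) \<noteq> 0 \<Longrightarrow> inverse mu = - mu \<longleftrightarrow> mu * mu = -1"
proof
  assume "mu \<noteq> 0" "inverse mu = - mu"
  then have "mu * (- mu) = 1" by (metis right_inverse)
  then show "mu * mu = -1" by (simp add: minus_equation_iff)
next
  assume "mu * mu = -1"
  then have "mu * (- mu) = 1" by simp
  then show "inverse mu = - mu" by (rule inverse_unique)
qed

lemma inverse_square_eq_minus_one_iff:
  "inverse (mu::'k::field) * inverse mu = -1 \<longleftrightarrow> mu * mu = -1"
proof -
  have "inverse mu * inverse mu = inverse (mu * mu)" by (simp add: inverse_mult_distrib)
  moreover have "inverse (mu * mu) = -1 \<longleftrightarrow> mu * mu = -1"
    by (metis inverse_1 inverse_inverse_eq inverse_minus_eq)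
  ultimately show ?thesis by simp
qed

text \<open>A set of representatives for the pairs \<open>{\<mu>, \<mu>\<inverse>}\<close>, \<open>\<mu> \<noteq> 0, \<plusminus>1\<close>, which is closed
  under negation except where this is impossible, namely where \<open>\<mu>\<inverse> = -\<mu>\<close>.\<close>

definition eigen_transversal :: "'k::field set \<Rightarrow> bool" where
  "eigen_transversal S \<longleftrightarrow> (\<forall>mu\<in>S. mu \<notin> {0, 1, -1}) \<and>
     (\<forall>mu. mu \<notin> {0, 1, -1} \<longrightarrow> (mu \<in> S \<longleftrightarrow> inverse mu \<notin> S)) \<and>
     (\<forall>mu\<in>S. mu * mu \<noteq> -1 \<longrightarrow> -mu \<in> S)"

lemma eigen_transversal_nontrivial: "eigen_transversal S \<Longrightarrow> mu \<in> S \<Longrightarrow> mu \<notin> {0, 1, -1}"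
  unfolding eigen_transversal_def by blast

lemma eigen_transversal_inverse_notin: "eigen_transversal S \<Longrightarrow> mu \<in> S \<Longrightarrow> inverse mu \<notin> S"
  unfolding eigen_transversal_def by blast

lemma eigen_transversal_uminus: "eigen_transversal S \<Longrightarrow> mu \<in> S \<Longrightarrow> mu * mu \<noteq> -1 \<Longrightarrow> - mu \<in> S"
  unfolding eigen_transversal_def by blast

lemma orbit_representative_inverse:
  fixes mu r :: "'k::field"
  assumes two: "(2::'k) \<noteq> 0" and mu: "mu \<notin> {0, 1, -1}"
    and r: "r \<in> {mu, inverse mu, -mu, -inverse mu}"
  shows "(mu = r \<or> (mu = - r \<and> r * r \<noteq> -1)) \<longleftrightarrow> \<not> (inverse mu = r \<or> (inverse mu = - r \<and> r * r \<noteq> -1))"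
proof -
  have im: "inverse mu \<notin> {0, 1, -1}" by (rule inverse_notin_trivial[OF mu])
  have nm: "mu \<noteq> -mu" "inverse mu \<noteq> - inverse mu" "inverse mu \<noteq> mu"
    using neq_uminus_self[OF two] inverse_neq_self mu im by auto
  have sq: "inverse mu = - mu \<longleftrightarrow> mu * mu = -1" "mu = - inverse mu \<longleftrightarrow> mu * mu = -1"
    using inverse_eq_uminus_iff[of mu] mu equation_minus_iff[of mu "inverse mu"] by auto
  note isq = inverse_square_eq_minus_one_iff[of mu]
  from r consider "r = mu" | "r = inverse mu" | "r = - mu" | "r = - inverse mu" by blast
  then show ?thesis
  proof cases
    case 1 then show ?thesis using nm sq by auto
  next
    case 2 then show ?thesis using nm sq isq by auto
  next
    case 3 then show ?thesis using nm sq by auto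
  next
    case 4 then show ?thesis using nm sq isq by auto
  qed
qed

text \<open>Pick a representative \<open>rep \<mu>\<close> of every orbit \<open>{\<mu>, \<mu>\<inverse>, -\<mu>, -\<mu>\<inverse>}\<close> and keep it, together
  with its negative unless \<open>rep \<mu>\<^sup>2 = -1\<close>.\<close>

lemma eigen_transversal_exists:
  assumes two: "(2::'k) \<noteq> 0"
  obtains S :: "'k::field set" where "eigen_transversal S"
proof -
  define orb :: "'k \<Rightarrow> 'k set" where "orb mu = {mu, inverse mu, -mu, -inverse mu}" for mu
  define rep where "rep mu = (SOME r. r \<in> orb mu)" for mu
  have rep_in: "rep mu \<in> orb mu" for mu unfolding rep_def by (rule someI[of _ mu], simp add: orb_def)
  have "orb (inverse mu) = orb mu" "orb (-mu) = orb mu" for mu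
    unfolding orb_def by (simp_all add: insert_commute inverse_minus_eq)
  then have rep_inv: "rep (inverse mu) = rep mu" and rep_neg: "rep (-mu) = rep mu" for mu
    unfolding rep_def by simp_all
  define S where "S = {mu. mu \<notin> {0, 1, -1} \<and> (mu = rep mu \<or> (mu = - rep mu \<and> rep mu * rep mu \<noteq> -1))}"
  have "mu \<in> S \<longleftrightarrow> inverse mu \<notin> S" if mu: "mu \<notin> {0, 1, -1}" for mu
    using orbit_representative_inverse[OF two mu rep_in[of mu, unfolded orb_def]]
      inverse_notin_trivial[OF mu] rep_inv[of mu] mu unfolding S_def by auto
  moreover have "-mu \<in> S" if "mu \<in> S" "mu * mu \<noteq> -1" for mu
  proof -
    from that(1) have mu: "mu \<notin> {0, 1, -1}"
      and "mu = rep mu \<or> (mu = - rep mu \<and> rep mu * rep mu \<noteq> -1)"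
      unfolding S_def by auto
    then have "-mu = rep (-mu) \<or> (-mu = - rep (-mu) \<and> rep (-mu) * rep (-mu) \<noteq> -1)"
      unfolding rep_neg using that(2) minus_equation_iff[of mu "rep mu"] by auto
    moreover have "-mu \<notin> {0, 1, -1}" using mu minus_equation_iff[of mu 1] by auto
    ultimately show ?thesis unfolding S_def by blast
  qed
  ultimately have "eigen_transversal S"
    unfolding eigen_transversal_def S_def by blast
  then show ?thesis by (rule that)
qed

section \<open>Construction of hyperbolic eigenbases\<close>

definition hyperbolic_system ::
  "'k::field mat \<Rightarrow> 'k mat \<Rightarrow> nat \<Rightarrow> nat \<Rightarrow> (nat \<Rightarrow> 'k vec) \<Rightarrow> (nat \<Rightarrow> 'k vec) \<Rightarrow> (nat \<Rightarrow> 'k) \<Rightarrow> bool"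
  where
  "hyperbolic_system B s n k e f lam \<longleftrightarrow>
    (\<forall>i<k. e i \<in> carrier_vec n \<and> f i \<in> carrier_vec n \<and> lam i \<noteq> 0 \<and>
       s *\<^sub>v e i = lam i \<cdot>\<^sub>v e i \<and> s *\<^sub>v f i = inverse (lam i) \<cdot>\<^sub>v f i) \<and>
    (\<forall>i<k. \<forall>j<k. bform B (e i) (e j) = 0 \<and> bform B (f i) (f j) = 0 \<and>
       bform B (e i) (f j) = (if i = j then 1 else 0))"

lemma hyperbolic_systemD:
  assumes "hyperbolic_system B s n k e f lam" and "i < k"
  shows "e i \<in> carrier_vec n" "f i \<in> carrier_vec n" "lam i \<noteq> 0"
    "s *\<^sub>v e i = lam i \<cdot>\<^sub>v e i" "s *\<^sub>v f i = inverse (lam i) \<cdot>\<^sub>v f i"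
  using assms unfolding hyperbolic_system_def by auto

lemma hyperbolic_system_bform:
  assumes "hyperbolic_system B s n k e f lam" and "i < k" and "j < k"
  shows "bform B (e i) (e j) = 0" "bform B (f i) (f j) = 0"
    "bform B (e i) (f j) = (if i = j then 1 else 0)"
  using assms unfolding hyperbolic_system_def by auto

lemma sum_two_blocks:
  fixes k n :: nat
  assumes "2 * k \<le> n"
  shows "(\<Sum>c<n. if c < k then F c else if c < 2 * k then G (c - k) else (0::'a::comm_monoid_add))
       = (\<Sum>c<k. F c) + (\<Sum>c<k. G c)"
proof -
  let ?h = "\<lambda>c. if c < k then F c else if c < 2 * k then G (c - k) else (0::'a)"
  have U: "{..<n} = {..<k} \<union> ({k..<2 * k} \<union> {2 * k..<n})" using assms by auto
  have "sum ?h {..<n} = sum ?h {..<k} + (sum ?h {k..<2 * k} + sum ?h {2 * k..<n})"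
    unfolding U by (subst sum.union_disjoint, auto, subst sum.union_disjoint, auto)
  moreover have "sum ?h {..<k} = (\<Sum>c<k. F c)" by (rule sum.cong) auto
  moreover have "sum ?h {k..<2 * k} = (\<Sum>c<k. G c)"
    using sum.shift_bounds_nat_ivl[of ?h 0 k k] by (simp add: atLeast0LessThan mult_2)
  ultimately show ?thesis by simp
qed

lemma det_mult_zero_col:
  fixes M X :: "'k::field mat"
  assumes M: "M \<in> carrier_mat n n" and X: "X \<in> carrier_mat n n" and j: "j < n"
    and zero: "\<And>a. a < n \<Longrightarrow> M $$ (a, j) = 0"
  shows "det (M * X) = 0"
proof -
  have "M *\<^sub>v unit_vec n j = 0\<^sub>v n"
    using M j zero by (intro eq_vecI) (auto simp: scalar_prod_right_unit)
  moreover have "unit_vec n j \<noteq> (0\<^sub>v n :: 'k vec)"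
    using j by (metis index_unit_vec(1) index_zero_vec(1) zero_neq_one)
  ultimately have "det M = 0"
    using det_0_iff_vec_prod_zero_field[OF M] by (metis unit_vec_carrier)
  then show ?thesis by (simp add: det_mult[OF M X])
qed

locale hyperbolic_basis_construction =
  fixes N m :: nat and B s Q Qi :: "'k::field mat" and d :: "nat \<Rightarrow> 'k" and S :: "'k set"
  assumes N_eq: "N = 2 * m"
    and B: "B \<in> carrier_mat N N" and BT: "B\<^sup>T = B"
    and s: "s \<in> carrier_mat N N" and Q: "Q \<in> carrier_mat N N" and Qi: "Qi \<in> carrier_mat N N"
    and Q_Qi: "Q * Qi = 1\<^sub>m N" and s_Q: "s * Q = Q * mat_diag N d"
    and isometry: "\<And>x y. x \<in> carrier_vec N \<Longrightarrow> y \<in> carrier_vec N \<Longrightarrow>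
      bform B (s *\<^sub>v x) (s *\<^sub>v y) = bform B x y"
    and nondegenerate: "\<And>x. x \<in> carrier_vec N \<Longrightarrow> (\<And>y. y \<in> carrier_vec N \<Longrightarrow> bform B x y = 0) \<Longrightarrow>
      x = 0\<^sub>v N"
    and eigenvalues: "\<And>j. j < N \<Longrightarrow> d j \<notin> {0, 1, -1}"
    and transversal: "eigen_transversal S"
begin

definition eigvec :: "nat \<Rightarrow> 'k vec" where
  "eigvec j = col Q j"

definition perp_proj :: "nat \<Rightarrow> (nat \<Rightarrow> 'k vec) \<Rightarrow> (nat \<Rightarrow> 'k vec) \<Rightarrow> 'k vec \<Rightarrow> 'k vec" where
  "perp_proj k e f v = vec N (\<lambda>a. v$a - (\<Sum>i<k. bform B v (f i) * e i $ a + bform B v (e i) * f i $ a))"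

lemma eigvec_carrier: "j < N \<Longrightarrow> eigvec j \<in> carrier_vec N"
  unfolding eigvec_def using Q by auto

lemma eigvec_eigen:
  assumes j: "j < N"
  shows "s *\<^sub>v eigvec j = d j \<cdot>\<^sub>v eigvec j"
proof -
  have "s *\<^sub>v eigvec j = col (s * Q) j"
    unfolding eigvec_def by (rule col_mult2[OF s Q j, symmetric])
  then show ?thesis
    unfolding eigvec_def s_Q mat_diag_mult_right[OF Q] using Q j by (intro eq_vecI) auto
qed

lemma eigvec_expansion:
  assumes v: "v \<in> carrier_vec N"
  shows "v = vec N (\<lambda>a. \<Sum>j<N. (Qi *\<^sub>v v) $ j * eigvec j $ a)"
proof -
  have "v = Q *\<^sub>v (Qi *\<^sub>v v)"
    using Q Qi v by (simp add: assoc_mult_mat_vec[symmetric] Q_Qi)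
  also have "\<dots> = vec N (\<lambda>a. \<Sum>j<N. (Qi *\<^sub>v v) $ j * eigvec j $ a)"
  proof (rule eq_vecI)
    fix a assume "a < dim_vec (vec N (\<lambda>a. \<Sum>j<N. (Qi *\<^sub>v v) $ j * eigvec j $ a))"
    then have a: "a < N" by simp
    show "(Q *\<^sub>v (Qi *\<^sub>v v)) $ a = vec N (\<lambda>a. \<Sum>j<N. (Qi *\<^sub>v v) $ j * eigvec j $ a) $ a"
      using mult_mat_vec_nth_eq_sum[OF Q _ a, of "Qi *\<^sub>v v"] Qi v a Q unfolding eigvec_def
      by (auto intro!: sum.cong simp: mult.commute)
  qed (use Q in auto)
  finally show ?thesis .
qed

lemma det_Q_nonzero: "det Q \<noteq> 0"
  using det_mult[OF Q Qi] Q_Qi by auto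

lemma bform_eigen_scale:
  assumes x: "x \<in> carrier_vec N" and y: "y \<in> carrier_vec N"
    and sx: "s *\<^sub>v x = a \<cdot>\<^sub>v x" and sy: "s *\<^sub>v y = b \<cdot>\<^sub>v y"
  shows "bform B x y = a * b * bform B x y"
  using isometry[OF x y] bform_smult_left[OF B x, of "b \<cdot>\<^sub>v y" a] bform_smult_right[OF B x y, of b] x y
  unfolding sx sy by simp

lemma bform_eigen_shift:
  assumes x: "x \<in> carrier_vec N" and y: "y \<in> carrier_vec N"
    and sx: "s *\<^sub>v x = a \<cdot>\<^sub>v x" and sy: "s *\<^sub>v y = b \<cdot>\<^sub>v y" and b: "b \<noteq> 0"
  shows "bform B x y * inverse b = a * bform B x y"
proof -
  have "bform B x y * inverse b = (a * b * bform B x y) * inverse b"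
    using bform_eigen_scale[OF x y sx sy] by (rule arg_cong)
  also have "\<dots> = a * bform B x y" using b by (simp add: field_simps)
  finally show ?thesis .
qed

lemma bform_eigen_isotropic:
  assumes x: "x \<in> carrier_vec N" and sx: "s *\<^sub>v x = l \<cdot>\<^sub>v x" and l: "l * l \<noteq> 1"
  shows "bform B x x = 0"
proof -
  have "(1 - l * l) * bform B x x = 0"
    using bform_eigen_scale[OF x x sx sx] by (simp add: algebra_simps)
  then show ?thesis using l by simp
qed

lemma perp_proj_carrier: "perp_proj k e f v \<in> carrier_vec N"
  unfolding perp_proj_def by simp

lemma bform_perp_proj_system:
  assumes h: "hyperbolic_system B s N k e f lam" and i: "i < k"
  shows "bform B (perp_proj k e f v) (e i) = 0" "bform B (perp_proj k e f v) (f i) = 0"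
proof -
  note ef = hyperbolic_systemD(1,2)[OF h]
  have "bform B (f j) (e i) = bform B (e i) (f j)" if "j < k" for j
    using bform_sym[OF B BT ef(2)[OF that] ef(1)[OF i]] .
  then have "(\<Sum>j<k. bform B v (f j) * bform B (e j) (e i) + bform B v (e j) * bform B (f j) (e i))
     = (\<Sum>j<k. if j = i then bform B v (e i) else 0)"
    using hyperbolic_system_bform[OF h] i by (intro sum.cong) auto
  then show "bform B (perp_proj k e f v) (e i) = 0"
    unfolding perp_proj_def bform_diff_lincomb_left[OF B ef(1)[OF i]] using i by simp
  have "(\<Sum>j<k. bform B v (f j) * bform B (e j) (f i) + bform B v (e j) * bform B (f j) (f i))
     = (\<Sum>j<k. if j = i then bform B v (f i) else 0)"
    using hyperbolic_system_bform[OF h] i by (intro sum.cong) auto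
  then show "bform B (perp_proj k e f v) (f i) = 0"
    unfolding perp_proj_def bform_diff_lincomb_left[OF B ef(2)[OF i]] using i by simp
qed

lemma bform_perp_proj:
  assumes h: "hyperbolic_system B s N k e f lam" and v: "v \<in> carrier_vec N" and x: "x \<in> carrier_vec N"
    and perp: "\<And>i. i < k \<Longrightarrow> bform B x (e i) = 0 \<and> bform B x (f i) = 0"
  shows "bform B x (perp_proj k e f v) = bform B x v"
proof -
  note ef = hyperbolic_systemD(1,2)[OF h]
  have "(\<Sum>j<k. bform B v (f j) * bform B (e j) x + bform B v (e j) * bform B (f j) x) = 0"
    using bform_sym[OF B BT x ef(1)] bform_sym[OF B BT x ef(2)] perp by (intro sum.neutral) auto
  then show ?thesis
    using bform_sym[OF B BT x perp_proj_carrier] bform_sym[OF B BT x v]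
    unfolding perp_proj_def bform_diff_lincomb_left[OF B x] by simp
qed

lemma perp_proj_eigen:
  assumes h: "hyperbolic_system B s N k e f lam" and v: "v \<in> carrier_vec N" and sv: "s *\<^sub>v v = mu \<cdot>\<^sub>v v"
  shows "s *\<^sub>v perp_proj k e f v = mu \<cdot>\<^sub>v perp_proj k e f v"
proof -
  note ef = hyperbolic_systemD[OF h]
  have coeff_e: "bform B v (f i) * lam i = mu * bform B v (f i)"
    and coeff_f: "bform B v (e i) * inverse (lam i) = mu * bform B v (e i)" if i: "i < k" for i
    using bform_eigen_shift[OF v ef(2)[OF i] sv ef(5)[OF i]] bform_eigen_shift[OF v ef(1)[OF i] sv ef(4)[OF i]]
      ef(3)[OF i] by simp_all
  have "s *\<^sub>v perp_proj k e f v = vec N (\<lambda>a. (s *\<^sub>v v)$a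
      - (\<Sum>i<k. bform B v (f i) * (s *\<^sub>v e i) $ a + bform B v (e i) * (s *\<^sub>v f i) $ a))"
    unfolding perp_proj_def using ef(1,2) by (intro mult_mat_vec_diff_lincomb[OF s v]) auto
  also have "\<dots> = mu \<cdot>\<^sub>v perp_proj k e f v"
  proof (rule eq_vecI)
    fix a assume "a < dim_vec (mu \<cdot>\<^sub>v perp_proj k e f v)"
    then have a: "a < N" unfolding perp_proj_def by simp
    have "(\<Sum>i<k. bform B v (f i) * (s *\<^sub>v e i) $ a + bform B v (e i) * (s *\<^sub>v f i) $ a)
        = mu * (\<Sum>i<k. bform B v (f i) * e i $ a + bform B v (e i) * f i $ a)"
      unfolding sum_distrib_left
    proof (intro sum.cong refl)
      fix i assume "i \<in> {..<k}"
      then have i: "i < k" by simp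
      have "bform B v (f i) * (s *\<^sub>v e i) $ a + bform B v (e i) * (s *\<^sub>v f i) $ a
          = (bform B v (f i) * lam i) * e i $ a + (bform B v (e i) * inverse (lam i)) * f i $ a"
        using ef(1,2,4,5)[OF i] a by simp
      then show "bform B v (f i) * (s *\<^sub>v e i) $ a + bform B v (e i) * (s *\<^sub>v f i) $ a
          = mu * (bform B v (f i) * e i $ a + bform B v (e i) * f i $ a)"
        unfolding coeff_e[OF i] coeff_f[OF i] by (simp add: algebra_simps)
    qed
    moreover have "(s *\<^sub>v v) $ a = mu * v $ a" using sv v a by simp
    ultimately show "vec N (\<lambda>a. (s *\<^sub>v v)$a - (\<Sum>i<k. bform B v (f i) * (s *\<^sub>v e i) $ a
        + bform B v (e i) * (s *\<^sub>v f i) $ a)) $ a = (mu \<cdot>\<^sub>v perp_proj k e f v) $ a"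
      unfolding perp_proj_def using a by (simp add: right_diff_distrib)
  qed (auto simp: perp_proj_def)
  finally show ?thesis .
qed

text \<open>If all \<open>eigvec j\<close> lay in the span of the \<open>2 k < N\<close> vectors \<open>e i, f i\<close>, the invertible
  matrix \<open>Q\<close> would factor through a matrix with a zero column.\<close>

lemma perp_proj_eigvec_nonzero:
  assumes h: "hyperbolic_system B s N k e f lam" and k: "k < m"
  obtains j where "j < N" "perp_proj k e f (eigvec j) \<noteq> 0\<^sub>v N"
proof -
  have k2: "2 * k \<le> N" "2 * k < N" using k N_eq by auto
  define M where "M = mat N N (\<lambda>(a,c). if c < k then e c $ a else if c < 2*k then f (c - k) $ a else 0)"
  define X where "X = mat N N (\<lambda>(c,j). if c < k then bform B (eigvec j) (f c)
    else if c < 2*k then bform B (eigvec j) (e (c-k)) else 0)"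
  have "Q = M * X" if zero: "\<And>j. j < N \<Longrightarrow> perp_proj k e f (eigvec j) = 0\<^sub>v N"
  proof (rule eq_matI)
    fix a j assume "a < dim_row (M * X)" and "j < dim_col (M * X)"
    then have a: "a < N" and j: "j < N" unfolding M_def X_def by auto
    have "(M * X) $$ (a,j) = (\<Sum>c<N. if c < k then e c $ a * bform B (eigvec j) (f c)
        else if c < 2*k then f (c - k) $ a * bform B (eigvec j) (e (c-k)) else 0)"
      using a j unfolding M_def X_def by (auto simp: scalar_prod_def atLeast0LessThan intro!: sum.cong)
    also have "\<dots> = (\<Sum>i<k. bform B (eigvec j) (f i) * e i $ a + bform B (eigvec j) (e i) * f i $ a)"
      using sum_two_blocks[OF k2(1), of "\<lambda>c. e c $ a * bform B (eigvec j) (f c)"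
          "\<lambda>c. f c $ a * bform B (eigvec j) (e c)"]
      by (simp add: sum.distrib mult.commute)
    also have "\<dots> = Q $$ (a,j)"
      using arg_cong[OF zero[OF j], of "\<lambda>v. v $ a"] a j Q unfolding perp_proj_def eigvec_def by simp
    finally show "Q $$ (a,j) = (M * X) $$ (a,j)" by simp
  qed (use Q in \<open>auto simp: M_def X_def\<close>)
  moreover have "det (M * X) = 0"
    using k2 by (intro det_mult_zero_col[of _ N _ "N - 1"]) (auto simp: M_def X_def)
  ultimately show ?thesis using det_Q_nonzero that by blast
qed

lemma exists_dual_eigvec:
  assumes h: "hyperbolic_system B s N k e f lam" and x: "x \<in> carrier_vec N" and x0: "x \<noteq> 0\<^sub>v N"
    and sx: "s *\<^sub>v x = mu \<cdot>\<^sub>v x"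
    and perp: "\<And>i. i < k \<Longrightarrow> bform B x (e i) = 0 \<and> bform B x (f i) = 0"
  obtains y where "y \<in> carrier_vec N" "s *\<^sub>v y = inverse mu \<cdot>\<^sub>v y"
    "\<And>i. i < k \<Longrightarrow> bform B y (e i) = 0 \<and> bform B y (f i) = 0" "bform B x y = 1"
proof -
  obtain z where z: "z \<in> carrier_vec N" and xz: "bform B x z \<noteq> 0" using nondegenerate[OF x] x0 by blast
  have "bform B x z = (\<Sum>j<N. (Qi *\<^sub>v z) $ j * bform B x (eigvec j))"
    by (subst eigvec_expansion[OF z], rule bform_lincomb_right[OF B BT x], auto intro: eigvec_carrier)
  then obtain j where j: "j < N" and xq: "bform B x (eigvec j) \<noteq> 0"
    using xz by (metis (no_types, lifting) lessThan_iff mult_zero_right sum.neutral)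
  have "bform B x (eigvec j) = mu * d j * bform B x (eigvec j)"
    by (rule bform_eigen_scale[OF x eigvec_carrier[OF j] sx eigvec_eigen[OF j]])
  then have dj: "d j = inverse mu" using xq by (metis inverse_unique mult.commute mult_cancel_right2)
  define y0 where "y0 = perp_proj k e f (eigvec j)"
  have y0: "y0 \<in> carrier_vec N" unfolding y0_def by (rule perp_proj_carrier)
  have "bform B x y0 = bform B x (eigvec j)"
    unfolding y0_def by (rule bform_perp_proj[OF h eigvec_carrier[OF j] x perp])
  show ?thesis
  proof
    show "inverse (bform B x y0) \<cdot>\<^sub>v y0 \<in> carrier_vec N" using y0 by simp
    show "s *\<^sub>v (inverse (bform B x y0) \<cdot>\<^sub>v y0) = inverse mu \<cdot>\<^sub>v (inverse (bform B x y0) \<cdot>\<^sub>v y0)"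
      using s y0 perp_proj_eigen[OF h eigvec_carrier[OF j] eigvec_eigen[OF j]] unfolding y0_def dj
      by (simp add: mult_mat_vec smult_smult_assoc mult.commute)
    show "bform B (inverse (bform B x y0) \<cdot>\<^sub>v y0) (e i) = 0 \<and> bform B (inverse (bform B x y0) \<cdot>\<^sub>v y0) (f i) = 0"
      if "i < k" for i
      using bform_smult_left[OF B y0] hyperbolic_systemD(1,2)[OF h that] bform_perp_proj_system[OF h that]
      unfolding y0_def by simp
    show "bform B x (inverse (bform B x y0) \<cdot>\<^sub>v y0) = 1"
      using bform_smult_right[OF B x y0] \<open>bform B x y0 = bform B x (eigvec j)\<close> xq by simp
  qed
qed

lemma hyperbolic_system_extend:
  assumes h: "hyperbolic_system B s N k e f lam"
    and x: "x \<in> carrier_vec N" and y: "y \<in> carrier_vec N"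
    and sx: "s *\<^sub>v x = l \<cdot>\<^sub>v x" and sy: "s *\<^sub>v y = inverse l \<cdot>\<^sub>v y" and l: "l \<notin> {0, 1, -1}"
    and px: "\<And>i. i < k \<Longrightarrow> bform B x (e i) = 0 \<and> bform B x (f i) = 0"
    and py: "\<And>i. i < k \<Longrightarrow> bform B y (e i) = 0 \<and> bform B y (f i) = 0"
    and xy: "bform B x y = 1"
  shows "hyperbolic_system B s N (Suc k) (e(k := x)) (f(k := y)) (lam(k := l))"
proof -
  have "l * l \<noteq> 1" "inverse l * inverse l \<noteq> 1"
    using l inverse_notin_trivial[OF l] by (auto simp: square_eq_1_iff)
  then have xx: "bform B x x = 0" and yy: "bform B y y = 0"
    using bform_eigen_isotropic[OF x sx] bform_eigen_isotropic[OF y sy] by auto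
  note ef = hyperbolic_systemD[OF h] and bf = hyperbolic_system_bform[OF h]
  have sym: "bform B (e i) x = 0" "bform B (f i) y = 0" "bform B (e i) y = 0" "bform B (f i) x = 0"
    if "i < k" for i
    using bform_sym[OF B BT ef(1)[OF that]] bform_sym[OF B BT ef(2)[OF that]] x y px[OF that] py[OF that]
    by auto
  show ?thesis
    unfolding hyperbolic_system_def
    apply (rule conjI; intro allI impI)
    subgoal for i using ef[of i] x y sx sy l by (cases "i = k") auto
    subgoal for i j using bf[of i j] sym[of i] sym[of j] px[of i] py[of i] px[of j] py[of j] xx yy xy
      by (cases "i = k"; cases "j = k") auto
    done
qed

lemma hyperbolic_system_step:
  assumes h: "hyperbolic_system B s N k e f lam" and lS: "\<forall>i<k. lam i \<in> S" and k: "k < m"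
  obtains x y l where "hyperbolic_system B s N (Suc k) (e(k := x)) (f(k := y)) (lam(k := l))"
    "\<forall>i<Suc k. (lam(k := l)) i \<in> S"
proof -
  obtain j where j: "j < N" and x0: "perp_proj k e f (eigvec j) \<noteq> 0\<^sub>v N"
    using perp_proj_eigvec_nonzero[OF h k] by blast
  define x where "x = perp_proj k e f (eigvec j)"
  have x: "x \<in> carrier_vec N" unfolding x_def by (rule perp_proj_carrier)
  have sx: "s *\<^sub>v x = d j \<cdot>\<^sub>v x"
    unfolding x_def by (rule perp_proj_eigen[OF h eigvec_carrier[OF j] eigvec_eigen[OF j]])
  have px: "\<And>i. i < k \<Longrightarrow> bform B x (e i) = 0 \<and> bform B x (f i) = 0"
    unfolding x_def using bform_perp_proj_system[OF h] by auto
  obtain y where y: "y \<in> carrier_vec N" and sy: "s *\<^sub>v y = inverse (d j) \<cdot>\<^sub>v y"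
    and py: "\<And>i. i < k \<Longrightarrow> bform B y (e i) = 0 \<and> bform B y (f i) = 0" and xy: "bform B x y = 1"
    using exists_dual_eigvec[OF h x x0[folded x_def] sx px] by blast
  have dj: "d j \<notin> {0, 1, -1}" "inverse (d j) \<notin> {0, 1, -1}"
    using eigenvalues[OF j] inverse_notin_trivial by auto
  show ?thesis
  proof (cases "d j \<in> S")
    case True
    show ?thesis
      by (rule that[OF hyperbolic_system_extend[OF h x y sx sy dj(1) px py xy]]) (use lS True in auto)
  next
    case False
    then have "inverse (d j) \<in> S"
      using transversal dj(1) unfolding eigen_transversal_def by blast
    moreover have "s *\<^sub>v x = inverse (inverse (d j)) \<cdot>\<^sub>v x" using sx by simp
    moreover have "bform B y x = 1" using bform_sym[OF B BT x y] xy by simp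
    ultimately show ?thesis
      using that[OF hyperbolic_system_extend[OF h y x sy _ dj(2) py px]] lS by auto
  qed
qed

lemma hyperbolic_basis_exists:
  obtains e f lam where "hyperbolic_system B s N m e f lam" "\<forall>i<m. lam i \<in> S"
proof -
  have "\<exists>e f lam. hyperbolic_system B s N k e f lam \<and> (\<forall>i<k. lam i \<in> S)" if "k \<le> m" for k
    using that
  proof (induct k)
    case 0
    show ?case by (auto simp: hyperbolic_system_def)
  next
    case (Suc k)
    then obtain e f lam where "hyperbolic_system B s N k e f lam" "\<forall>i<k. lam i \<in> S" by auto
    with hyperbolic_system_step[OF this] Suc(2) show ?case by (metis Suc_le_lessD)
  qed
  then show ?thesis using that by blast
qed

end

section \<open>The matrix of a hyperbolic eigenbasis\<close>

definition pair_swap :: "nat \<Rightarrow> nat \<Rightarrow> nat" where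
  "pair_swap m j = (if j < m then j + m else if j < 2 * m then j - m else j)"

definition hyperbolic_gram :: "nat \<Rightarrow> 'k::field mat" where
  "hyperbolic_gram m = mat (2 * m) (2 * m) (\<lambda>(i,j). if j = pair_swap m i then 1 else 0)"

definition basis_mat :: "nat \<Rightarrow> (nat \<Rightarrow> 'k::field vec) \<Rightarrow> (nat \<Rightarrow> 'k vec) \<Rightarrow> 'k mat" where
  "basis_mat m e f = mat (2 * m) (2 * m) (\<lambda>(a,j). if j < m then e j $ a else f (j - m) $ a)"

definition eigenvalue_seq :: "nat \<Rightarrow> (nat \<Rightarrow> 'k::field) \<Rightarrow> nat \<Rightarrow> 'k" where
  "eigenvalue_seq m lam j = (if j < m then lam j else inverse (lam (j - m)))"

lemma pair_swap_pair_swap [simp]: "pair_swap m (pair_swap m j) = j"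
  unfolding pair_swap_def by auto

lemma pair_swap_permutes: "pair_swap m permutes {0..<2 * m}"
proof -
  have "bij_betw (pair_swap m) {0..<2 * m} {0..<2 * m}"
    by (rule bij_betw_byWitness[where f' = "pair_swap m"]) (auto simp: pair_swap_def)
  then show ?thesis by (rule bij_imp_permutes) (simp add: pair_swap_def)
qed

lemma hyperbolic_gram_carrier [simp]: "hyperbolic_gram m \<in> carrier_mat (2 * m) (2 * m)"
  and basis_mat_carrier [simp]: "basis_mat m e f \<in> carrier_mat (2 * m) (2 * m)"
  unfolding hyperbolic_gram_def basis_mat_def by simp_all

lemma basis_mat_dims [simp]: "dim_row (basis_mat m e f) = 2 * m" "dim_col (basis_mat m e f) = 2 * m"
  and hyperbolic_gram_dims [simp]: "dim_row (hyperbolic_gram m :: 'k::field mat) = 2 * m"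
    "dim_col (hyperbolic_gram m :: 'k mat) = 2 * m"
  unfolding hyperbolic_gram_def basis_mat_def by simp_all

lemma hyperbolic_gram_square: "hyperbolic_gram m * (hyperbolic_gram m :: 'k::field mat) = 1\<^sub>m (2 * m)"
proof (rule eq_matI)
  fix i j assume "i < dim_row (1\<^sub>m (2 * m) :: 'k mat)" "j < dim_col (1\<^sub>m (2 * m) :: 'k mat)"
  then have i: "i < 2 * m" and j: "j < 2 * m" by auto
  have "(hyperbolic_gram m * hyperbolic_gram m :: 'k mat) $$ (i,j)
      = (\<Sum>c\<in>{0..<2 * m}. (if c = pair_swap m i then 1 else 0) * (if j = pair_swap m c then 1 else 0))"
    using i j unfolding hyperbolic_gram_def by (simp add: scalar_prod_def)
  also have "\<dots> = (\<Sum>c\<in>{0..<2 * m}. if c = pair_swap m i then (if j = i then 1 else 0) else (0::'k))"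
    by (intro sum.cong) auto
  also have "\<dots> = (if j = i then 1 else 0)"
    using i by (auto simp: pair_swap_def)
  finally show "(hyperbolic_gram m * hyperbolic_gram m :: 'k mat) $$ (i,j) = 1\<^sub>m (2 * m) $$ (i,j)"
    using i j by simp
qed auto

lemma col_basis_mat:
  assumes "hyperbolic_system B s (2 * m) m e f lam" and "j < 2 * m"
  shows "col (basis_mat m e f) j = (if j < m then e j else f (j - m))"
proof (cases "j < m")
  case True
  then show ?thesis
    using assms hyperbolic_systemD(1)[OF assms(1) True] unfolding basis_mat_def by (intro eq_vecI) auto
next
  case False
  then have "j - m < m" using assms(2) by simp
  then show ?thesis
    using False assms hyperbolic_systemD(2)[OF assms(1) \<open>j - m < m\<close>] unfolding basis_mat_def
    by (intro eq_vecI) auto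
qed

lemma transpose_mult_mult_index:
  fixes P B :: "'k::field mat"
  assumes P: "P \<in> carrier_mat n n" and B: "B \<in> carrier_mat n n" and i: "i < n" and j: "j < n"
  shows "(P\<^sup>T * B * P) $$ (i,j) = bform B (col P i) (col P j)"
proof -
  have "P\<^sup>T * B * P = P\<^sup>T * (B * P)" using P B by (simp add: assoc_mult_mat[of _ n n _ n _ n])
  then have "(P\<^sup>T * B * P) $$ (i,j) = row P\<^sup>T i \<bullet> col (B * P) j" using P B i j by simp
  also have "\<dots> = col P i \<bullet> (B *\<^sub>v col P j)"
    unfolding col_mult2[OF B P j] using P i by (simp add: row_transpose)
  finally show ?thesis unfolding bform_def .
qed

lemma basis_mat_gram:
  fixes B s :: "'k::field mat"
  assumes h: "hyperbolic_system B s (2 * m) m e f lam"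
    and B: "B \<in> carrier_mat (2 * m) (2 * m)" and BT: "B\<^sup>T = B"
  shows "(basis_mat m e f)\<^sup>T * B * basis_mat m e f = hyperbolic_gram m"
proof (rule eq_matI)
  fix i j assume "i < dim_row (hyperbolic_gram m :: 'k mat)" "j < dim_col (hyperbolic_gram m :: 'k mat)"
  then have i: "i < 2 * m" and j: "j < 2 * m" unfolding hyperbolic_gram_def by auto
  note ef = hyperbolic_systemD(1,2)[OF h] and bf = hyperbolic_system_bform[OF h]
  have "bform B (f a) (e b) = bform B (e b) (f a)" if "a < m" "b < m" for a b
    using bform_sym[OF B BT ef(2)[OF that(1)] ef(1)[OF that(2)]] .
  then have "bform B (col (basis_mat m e f) i) (col (basis_mat m e f) j) = hyperbolic_gram m $$ (i,j)"
    using i j bf[of i "j - m"] bf[of j "i - m"] bf[of i j] bf[of "i - m" "j - m"]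
    unfolding col_basis_mat[OF h i] col_basis_mat[OF h j] hyperbolic_gram_def pair_swap_def
    by (cases "i < m"; cases "j < m") auto
  then show "((basis_mat m e f)\<^sup>T * B * basis_mat m e f) $$ (i,j) = hyperbolic_gram m $$ (i,j)"
    using transpose_mult_mult_index[OF basis_mat_carrier B i j] by simp
qed (use B in \<open>auto simp: hyperbolic_gram_def\<close>)

lemma basis_mat_eigen:
  fixes B s :: "'k::field mat"
  assumes h: "hyperbolic_system B s (2 * m) m e f lam" and s: "s \<in> carrier_mat (2 * m) (2 * m)"
  shows "s * basis_mat m e f = basis_mat m e f * mat_diag (2 * m) (eigenvalue_seq m lam)"
proof (rule eq_matI)
  fix a j assume "a < dim_row (basis_mat m e f * mat_diag (2 * m) (eigenvalue_seq m lam))"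
    and "j < dim_col (basis_mat m e f * mat_diag (2 * m) (eigenvalue_seq m lam))"
  then have a: "a < 2 * m" and j: "j < 2 * m" by (auto simp: mat_diag_def)
  note ef = hyperbolic_systemD[OF h]
  have "(s * basis_mat m e f) $$ (a,j) = (s *\<^sub>v col (basis_mat m e f) j) $ a"
    using s a j by simp
  also have "\<dots> = basis_mat m e f $$ (a,j) * eigenvalue_seq m lam j"
    unfolding col_basis_mat[OF h j] using ef[of j] ef[of "j - m"] a j less_diff_conv2[of m j m]
    by (cases "j < m") (auto simp: eigenvalue_seq_def basis_mat_def)
  finally show "(s * basis_mat m e f) $$ (a,j) = (basis_mat m e f * mat_diag (2 * m) (eigenvalue_seq m lam)) $$ (a,j)"
    using a j by (simp add: mat_diag_mult_right[OF basis_mat_carrier])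
qed (use s in \<open>auto simp: mat_diag_def\<close>)

definition basis_mat_inv :: "'k::field mat \<Rightarrow> nat \<Rightarrow> (nat \<Rightarrow> 'k vec) \<Rightarrow> (nat \<Rightarrow> 'k vec) \<Rightarrow> 'k mat" where
  "basis_mat_inv B m e f = hyperbolic_gram m * (basis_mat m e f)\<^sup>T * B"

lemma basis_mat_inv_carrier [simp]:
  "B \<in> carrier_mat (2 * m) (2 * m) \<Longrightarrow> basis_mat_inv B m e f \<in> carrier_mat (2 * m) (2 * m)"
  unfolding basis_mat_inv_def by (intro mult_carrier_mat[of _ _ "2 * m"]) auto

lemma basis_mat_inverse:
  fixes B s :: "'k::field mat"
  assumes h: "hyperbolic_system B s (2 * m) m e f lam"
    and B: "B \<in> carrier_mat (2 * m) (2 * m)" and BT: "B\<^sup>T = B"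
  shows "basis_mat_inv B m e f * basis_mat m e f = 1\<^sub>m (2 * m)"
    "basis_mat m e f * basis_mat_inv B m e f = 1\<^sub>m (2 * m)"
proof -
  let ?P = "basis_mat m e f" and ?J = "hyperbolic_gram m :: 'k mat"
  have "basis_mat_inv B m e f * ?P = ?J * (?P\<^sup>T * B) * ?P"
    unfolding basis_mat_inv_def using B
    by (simp add: assoc_mult_mat[of _ "2 * m" "2 * m" _ "2 * m" _ "2 * m"])
  also have "\<dots> = ?J * (?P\<^sup>T * B * ?P)"
    using B by (subst assoc_mult_mat[of ?J "2 * m" "2 * m" _ "2 * m" _ "2 * m"]) auto
  also have "\<dots> = 1\<^sub>m (2 * m)"
    unfolding basis_mat_gram[OF h B BT] hyperbolic_gram_square ..
  finally show left: "basis_mat_inv B m e f * ?P = 1\<^sub>m (2 * m)" .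
  show "?P * basis_mat_inv B m e f = 1\<^sub>m (2 * m)"
    by (rule mat_mult_left_right_inverse[OF _ basis_mat_carrier left]) (use B in simp)
qed

lemma det_basis_mat_nonzero:
  fixes B s :: "'k::field mat"
  assumes "hyperbolic_system B s (2 * m) m e f lam"
    and B: "B \<in> carrier_mat (2 * m) (2 * m)" and "B\<^sup>T = B"
  shows "det (basis_mat m e f) \<noteq> 0"
proof
  assume "det (basis_mat m e f) = 0"
  then have "det (basis_mat_inv B m e f * basis_mat m e f) = 0"
    by (simp add: det_mult[OF basis_mat_inv_carrier[OF B] basis_mat_carrier])
  then show False unfolding basis_mat_inverse(1)[OF assms] by simp
qed

lemma similar_eigenvalue_seq:
  fixes B s :: "'k::field mat"
  assumes h: "hyperbolic_system B s (2 * m) m e f lam"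
    and B: "B \<in> carrier_mat (2 * m) (2 * m)" and BT: "B\<^sup>T = B" and s: "s \<in> carrier_mat (2 * m) (2 * m)"
  shows "similar_mat s (mat_diag (2 * m) (eigenvalue_seq m lam))"
proof -
  let ?P = "basis_mat m e f" and ?D = "mat_diag (2 * m) (eigenvalue_seq m lam)"
  note inv = basis_mat_inverse[OF h B BT]
  have "s = s * (?P * basis_mat_inv B m e f)" using inv s by simp
  also have "\<dots> = ?P * ?D * basis_mat_inv B m e f"
    unfolding basis_mat_eigen[OF h s, symmetric] using s B
    by (simp add: assoc_mult_mat[of _ "2 * m" "2 * m" _ "2 * m" _ "2 * m"])
  finally show ?thesis
    using inv s B by (intro similar_matI[of _ _ _ _ "2 * m"]) auto
qed

lemma eigsp_dim_hyperbolic_system: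
  fixes B s :: "'k::field mat"
  assumes h: "hyperbolic_system B s (2 * m) m e f lam"
    and B: "B \<in> carrier_mat (2 * m) (2 * m)" and BT: "B\<^sup>T = B" and s: "s \<in> carrier_mat (2 * m) (2 * m)"
    and not_inverse: "\<And>i. i < m \<Longrightarrow> inverse (lam i) \<noteq> mu"
  shows "eigsp_dim s mu = card {i. i < m \<and> lam i = mu}"
proof -
  have "eigenvalue_seq m lam j \<noteq> mu" if "\<not> j < m" "j < 2 * m" for j
    using not_inverse[of "j - m"] that by (simp add: eigenvalue_seq_def)
  then have "{j. j < 2 * m \<and> eigenvalue_seq m lam j = mu} = {i. i < m \<and> lam i = mu}"
    by (force simp: eigenvalue_seq_def)
  then show ?thesis
    using eigsp_dim_similar_mat_diag[OF similar_eigenvalue_seq[OF h B BT s]] by simp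
qed

lemma det_permute_cols:
  fixes A :: "'k::field mat"
  assumes A: "A \<in> carrier_mat n n" and p: "p permutes {0..<n}"
  shows "det (mat n n (\<lambda>(i,j). A $$ (i, p j))) = signof p * det A"
proof -
  have "mat n n (\<lambda>(i,j). A $$ (i, p j)) = (mat n n (\<lambda>(i,j). A\<^sup>T $$ (p i, j)))\<^sup>T"
    using A p by (intro eq_matI) (auto simp: permutes_in_image)
  then have "det (mat n n (\<lambda>(i,j). A $$ (i, p j))) = det (mat n n (\<lambda>(i,j). A\<^sup>T $$ (p i, j)))"
    using det_transpose[of "mat n n (\<lambda>(i,j). A\<^sup>T $$ (p i, j))" n] by simp
  also have "\<dots> = signof p * det A"
    using det_permute_rows[OF _ p, of "A\<^sup>T"] A by (simp add: det_transpose)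
  finally show ?thesis .
qed

lemma sign_comp_comp_comp:
  assumes "permutation p" and "permutation q"
  shows "sign (p \<circ> q \<circ> p \<circ> q) = 1"
  using assms by (simp add: sign_compose permutation_compose) (simp add: sign_def)

text \<open>Permuting the pairs \<open>(e i, f i)\<close> permutes the columns of the basis matrix by \<open>p\<close>
  on both halves, an even permutation.\<close>

lemma hyperbolic_system_permute:
  fixes B s :: "'k::field mat"
  assumes h: "hyperbolic_system B s (2 * m) m e f lam" and p: "p permutes {..<m}"
  shows "hyperbolic_system B s (2 * m) m (e \<circ> p) (f \<circ> p) (lam \<circ> p)"
    "det (basis_mat m (e \<circ> p) (f \<circ> p)) = det (basis_mat m e f)"
proof -
  have pin: "i < m \<Longrightarrow> p i < m" for i using permutes_in_image[OF p, of i] by simp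
  have pout: "m \<le> j \<Longrightarrow> p j = j" for j using permutes_not_in[OF p, of j] by simp
  show "hyperbolic_system B s (2 * m) m (e \<circ> p) (f \<circ> p) (lam \<circ> p)"
    using h pin permutes_inj[OF p] unfolding hyperbolic_system_def by (simp add: inj_eq)
  define rho where "rho = p \<circ> pair_swap m \<circ> p \<circ> pair_swap m"
  have p2: "p permutes {0..<2 * m}" by (rule permutes_subset[OF p]) auto
  have rho: "rho permutes {0..<2 * m}"
    unfolding rho_def by (intro permutes_compose p2 pair_swap_permutes)
  have rho_eq: "rho j = (if j < m then p j else if j < 2 * m then p (j - m) + m else j)" for j
    using pin[of j] pin[of "j - m"] pout[of "j + m"] pout[of j] pout[of "p (j - m) + m"]
    unfolding rho_def pair_swap_def by auto
  have "basis_mat m (e \<circ> p) (f \<circ> p) = mat (2 * m) (2 * m) (\<lambda>(a,j). basis_mat m e f $$ (a, rho j))"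
  proof -
    have "p j < 2 * m" if "j < m" for j using pin[OF that] by simp
    then show ?thesis unfolding basis_mat_def using pin by (intro eq_matI) (auto simp: rho_eq)
  qed
  moreover have "permutation p" "permutation (pair_swap m)"
    using p2 pair_swap_permutes permutation_permutes by blast+
  ultimately show "det (basis_mat m (e \<circ> p) (f \<circ> p)) = det (basis_mat m e f)"
    using det_permute_cols[OF basis_mat_carrier rho, of e f] sign_comp_comp_comp[of p "pair_swap m"]
    unfolding rho_def by simp
qed

lemma hyperbolic_system_swap:
  fixes B s :: "'k::field mat"
  assumes h: "hyperbolic_system B s (2 * m) m e f lam" and i: "i < m"
    and B: "B \<in> carrier_mat (2 * m) (2 * m)" and BT: "B\<^sup>T = B"
  shows "hyperbolic_system B s (2 * m) m (e(i := f i)) (f(i := e i)) (lam(i := inverse (lam i)))"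
    "det (basis_mat m (e(i := f i)) (f(i := e i))) = - det (basis_mat m e f)"
proof -
  note ef = hyperbolic_systemD[OF h] and bf = hyperbolic_system_bform[OF h]
  have sym: "bform B (f a) (e b) = bform B (e b) (f a)" if "a < m" "b < m" for a b
    using bform_sym[OF B BT ef(2)[OF that(1)] ef(1)[OF that(2)]] .
  show "hyperbolic_system B s (2 * m) m (e(i := f i)) (f(i := e i)) (lam(i := inverse (lam i)))"
    unfolding hyperbolic_system_def
    apply (rule conjI; intro allI impI)
    subgoal for a using ef[of a] ef[OF i] by (cases "a = i") auto
    subgoal for a b
      using bf[of a b] bf[OF i, of b] bf[of a i] bf[OF i i] bf[of b i] bf[OF i, of a]
        sym[OF i, of b] sym[of a i] sym[OF i i] i
      by (cases "a = i"; cases "b = i") auto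
    done
  let ?t = "Transposition.transpose i (i + m)"
  have t: "?t permutes {0..<2 * m}" using i by (intro permutes_swap_id) auto
  have "basis_mat m (e(i := f i)) (f(i := e i)) = mat (2 * m) (2 * m) (\<lambda>(a,j). basis_mat m e f $$ (a, ?t j))"
    unfolding basis_mat_def using i by (intro eq_matI) (auto simp: Transposition.transpose_def)
  then show "det (basis_mat m (e(i := f i)) (f(i := e i))) = - det (basis_mat m e f)"
    using det_permute_cols[OF basis_mat_carrier t] i by (simp add: sign_swap_id)
qed

lemma hyperbolic_system_swap_set:
  fixes B s :: "'k::field mat"
  assumes h: "hyperbolic_system B s (2 * m) m e f lam" and T: "T \<subseteq> {..<m}"
    and B: "B \<in> carrier_mat (2 * m) (2 * m)" and BT: "B\<^sup>T = B"
  obtains e' f' where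
    "hyperbolic_system B s (2 * m) m e' f' (\<lambda>i. if i \<in> T then inverse (lam i) else lam i)"
    "det (basis_mat m e' f') = (-1) ^ card T * det (basis_mat m e f)"
proof -
  have "finite T" using T finite_subset by blast
  then have "\<exists>e' f'. hyperbolic_system B s (2 * m) m e' f' (\<lambda>i. if i \<in> T then inverse (lam i) else lam i) \<and>
    det (basis_mat m e' f') = (-1) ^ card T * det (basis_mat m e f)"
    using T
  proof (induct T rule: finite_induct)
    case empty
    show ?case using h by auto
  next
    case (insert x F)
    then obtain e1 f1 where h1: "hyperbolic_system B s (2 * m) m e1 f1 (\<lambda>i. if i \<in> F then inverse (lam i) else lam i)"
      and d1: "det (basis_mat m e1 f1) = (-1) ^ card F * det (basis_mat m e f)" by auto
    have x: "x < m" using insert by auto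
    have "(\<lambda>i. if i \<in> F then inverse (lam i) else lam i)(x := inverse (if x \<in> F then inverse (lam x) else lam x))
        = (\<lambda>i. if i \<in> insert x F then inverse (lam i) else lam i)" using insert(2) by auto
    then show ?case
      using hyperbolic_system_swap[OF h1 x B BT] d1 insert(1,2) by auto
  qed
  then show ?thesis using that by blast
qed

lemma hyperbolic_system_uminus:
  fixes B s :: "'k::field mat"
  assumes h: "hyperbolic_system B s n m e f lam" and s: "s \<in> carrier_mat n n"
  shows "hyperbolic_system B (- s) n m e f (\<lambda>i. - lam i)"
proof -
  have "(- s) *\<^sub>v v = (- c) \<cdot>\<^sub>v v" if "v \<in> carrier_vec n" "s *\<^sub>v v = c \<cdot>\<^sub>v v" for v c
    using that s by (simp add: uminus_mult_mat_vec) (intro eq_vecI; simp)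
  then show ?thesis using h unfolding hyperbolic_system_def by (auto simp: inverse_minus_eq)
qed

section \<open>Conjugacy by isometries\<close>

definition isometric_conj :: "'k::field mat \<Rightarrow> nat \<Rightarrow> 'k mat \<Rightarrow> 'k mat \<Rightarrow> 'k \<Rightarrow> bool" where
  "isometric_conj B n s t \<delta> \<longleftrightarrow> (\<exists>g g'. g \<in> carrier_mat n n \<and> g' \<in> carrier_mat n n \<and>
     g * g' = 1\<^sub>m n \<and> g' * g = 1\<^sub>m n \<and> g\<^sup>T * B * g = B \<and> g * s = t * g \<and> det g = \<delta>)"

lemma isometric_conjI:
  assumes "g \<in> carrier_mat n n" "g' \<in> carrier_mat n n" "g * g' = 1\<^sub>m n" "g' * g = 1\<^sub>m n"
    "g\<^sup>T * B * g = B" "g * s = t * g" "det g = \<delta>"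
  shows "isometric_conj B n s t \<delta>"
  using assms unfolding isometric_conj_def by blast

lemma isometric_conjE:
  assumes "isometric_conj B n s t \<delta>"
  obtains g g' where "g \<in> carrier_mat n n" "g' \<in> carrier_mat n n" "g * g' = 1\<^sub>m n" "g' * g = 1\<^sub>m n"
    "g\<^sup>T * B * g = B" "g * s = t * g" "det g = \<delta>"
  using assms unfolding isometric_conj_def by blast

lemma isometric_conj_sym:
  assumes conj: "isometric_conj B n s t \<delta>"
    and B: "B \<in> carrier_mat n n" and s: "s \<in> carrier_mat n n" and t: "t \<in> carrier_mat n n"
  shows "isometric_conj B n t s (inverse \<delta>)"
proof -
  obtain g g' where g: "g \<in> carrier_mat n n" and g': "g' \<in> carrier_mat n n"
    and inv: "g * g' = 1\<^sub>m n" "g' * g = 1\<^sub>m n" and iso: "g\<^sup>T * B * g = B"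
    and gs: "g * s = t * g" and det: "det g = \<delta>"
    using conj by (rule isometric_conjE)
  note assoc = assoc_mult_mat[of _ n n _ n _ n]
  show ?thesis
  proof (rule isometric_conjI[OF g' g inv(2,1)])
    have "g'\<^sup>T * B * g' = g'\<^sup>T * (g\<^sup>T * B * g) * g'" by (simp only: iso)
    also have "\<dots> = (g * g')\<^sup>T * B * (g * g')"
      using g g' B by (simp add: transpose_mult[OF g g'] assoc)
    finally show "g'\<^sup>T * B * g' = B" using B inv by simp
    have "g' * t = g' * (t * g) * g'"
      using g g' t inv by (simp add: assoc)
    also have "\<dots> = (g' * g) * s * g'"
      unfolding gs[symmetric] using g g' s by (simp add: assoc)
    also have "\<dots> = s * g'" using g' s inv by simp
    finally show "g' * t = s * g'" .
    have "det g * det g' = 1" using det_mult[OF g g'] inv by simp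
    then show "det g' = inverse \<delta>" using inverse_unique[of "det g" "det g'"] det by simp
  qed
qed

lemma isometric_conj_trans:
  assumes st: "isometric_conj B n s t \<delta>" and tu: "isometric_conj B n t u \<epsilon>"
    and B: "B \<in> carrier_mat n n" and s: "s \<in> carrier_mat n n" and t: "t \<in> carrier_mat n n"
    and u: "u \<in> carrier_mat n n"
  shows "isometric_conj B n s u (\<epsilon> * \<delta>)"
proof -
  obtain g g' where g: "g \<in> carrier_mat n n" and g': "g' \<in> carrier_mat n n"
    and inv: "g * g' = 1\<^sub>m n" "g' * g = 1\<^sub>m n" and iso: "g\<^sup>T * B * g = B"
    and gs: "g * s = t * g" and det: "det g = \<delta>"
    using st by (rule isometric_conjE)
  obtain h h' where h: "h \<in> carrier_mat n n" and h': "h' \<in> carrier_mat n n"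
    and inv': "h * h' = 1\<^sub>m n" "h' * h = 1\<^sub>m n" and iso': "h\<^sup>T * B * h = B"
    and ht: "h * t = u * h" and det': "det h = \<epsilon>"
    using tu by (rule isometric_conjE)
  note assoc = assoc_mult_mat[of _ n n _ n _ n]
  show ?thesis
  proof (rule isometric_conjI[of "h * g" n "g' * h'"])
    show "h * g \<in> carrier_mat n n" "g' * h' \<in> carrier_mat n n" using g g' h h' by auto
    have "h * g * (g' * h') = h * (g * g') * h'" using g g' h h' by (simp add: assoc)
    then show "h * g * (g' * h') = 1\<^sub>m n" using h h' inv inv' by simp
    have "g' * h' * (h * g) = g' * (h' * h) * g" using g g' h h' by (simp add: assoc)
    then show "g' * h' * (h * g) = 1\<^sub>m n" using g g' inv inv' by simp
    have "(h * g)\<^sup>T * B * (h * g) = g\<^sup>T * (h\<^sup>T * B * h) * g"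
      using g h B by (simp add: transpose_mult[OF h g] assoc)
    then show "(h * g)\<^sup>T * B * (h * g) = B" using iso iso' by simp
    have "h * g * s = h * t * g" using g h s t gs by (simp add: assoc)
    then show "h * g * s = u * (h * g)" using g h s u ht by (simp add: assoc)
    show "det (h * g) = \<epsilon> * \<delta>" using det_mult[OF h g] det det' by simp
  qed
qed

lemma conj_by_inverse_mat:
  fixes P Pi s D :: "'k::field mat"
  assumes P: "P \<in> carrier_mat n n" and Pi: "Pi \<in> carrier_mat n n" and s: "s \<in> carrier_mat n n"
    and D: "D \<in> carrier_mat n n" and inv: "Pi * P = 1\<^sub>m n" "P * Pi = 1\<^sub>m n" and sP: "s * P = P * D"
  shows "Pi * s = D * Pi"
proof -
  note assoc = assoc_mult_mat[of _ n n _ n _ n]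
  have "Pi * s = Pi * s * (P * Pi)" using Pi s inv by simp
  also have "\<dots> = Pi * (s * P) * Pi" using P Pi s by (simp add: assoc)
  also have "\<dots> = (Pi * P) * D * Pi" unfolding sP using P Pi D by (simp add: assoc)
  finally show ?thesis using D Pi inv by simp
qed

lemma isometry_of_equal_grams:
  fixes P P' Pi B :: "'k::field mat"
  assumes P: "P \<in> carrier_mat n n" and P': "P' \<in> carrier_mat n n" and Pi: "Pi \<in> carrier_mat n n"
    and B: "B \<in> carrier_mat n n" and inv: "P * Pi = 1\<^sub>m n" and gram: "P\<^sup>T * B * P = P'\<^sup>T * B * P'"
  shows "(P' * Pi)\<^sup>T * B * (P' * Pi) = B"
proof -
  note assoc = assoc_mult_mat[of _ n n _ n _ n]
  have "(P' * Pi)\<^sup>T * B * (P' * Pi) = Pi\<^sup>T * (P'\<^sup>T * B * P') * Pi"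
    using P' Pi B by (simp add: transpose_mult[OF P' Pi] assoc)
  also have "\<dots> = (P * Pi)\<^sup>T * B * (P * Pi)"
    unfolding gram[symmetric] using P Pi B by (simp add: transpose_mult[OF P Pi] assoc)
  finally show ?thesis using inv B by simp
qed

lemma hyperbolic_systems_isometric_conj:
  fixes B s t :: "'k::field mat"
  assumes h: "hyperbolic_system B s (2 * m) m e f lam" and h': "hyperbolic_system B t (2 * m) m e' f' lam'"
    and same: "\<And>i. i < m \<Longrightarrow> lam' i = lam i"
    and B: "B \<in> carrier_mat (2 * m) (2 * m)" and BT: "B\<^sup>T = B"
    and s: "s \<in> carrier_mat (2 * m) (2 * m)" and t: "t \<in> carrier_mat (2 * m) (2 * m)"
  shows "isometric_conj B (2 * m) s t (det (basis_mat m e' f') / det (basis_mat m e f))"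
proof -
  let ?n = "2 * m"
  define P where "P = basis_mat m e f"
  define P' where "P' = basis_mat m e' f'"
  define Pi where "Pi = basis_mat_inv B m e f"
  define Pi' where "Pi' = basis_mat_inv B m e' f'"
  define D where "D = mat_diag ?n (eigenvalue_seq m lam)"
  have c: "P \<in> carrier_mat ?n ?n" "P' \<in> carrier_mat ?n ?n" "Pi \<in> carrier_mat ?n ?n"
    "Pi' \<in> carrier_mat ?n ?n" "D \<in> carrier_mat ?n ?n"
    unfolding P_def P'_def Pi_def Pi'_def D_def using B by auto
  have PiP: "Pi * P = 1\<^sub>m ?n" "P * Pi = 1\<^sub>m ?n" and PiP': "Pi' * P' = 1\<^sub>m ?n" "P' * Pi' = 1\<^sub>m ?n"
    unfolding P_def P'_def Pi_def Pi'_def using basis_mat_inverse[OF h B BT] basis_mat_inverse[OF h' B BT]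
    by auto
  have "mat_diag ?n (eigenvalue_seq m lam') = D"
    unfolding D_def mat_diag_def eigenvalue_seq_def using same by (intro eq_matI) auto
  then have sP: "s * P = P * D" and tP': "t * P' = P' * D"
    unfolding P_def P'_def D_def using basis_mat_eigen[OF h s] basis_mat_eigen[OF h' t] by auto
  have gram: "P\<^sup>T * B * P = P'\<^sup>T * B * P'"
    unfolding P_def P'_def basis_mat_gram[OF h B BT] basis_mat_gram[OF h' B BT] ..
  note assoc = assoc_mult_mat[of _ ?n ?n _ ?n _ ?n]
  show ?thesis
  proof (rule isometric_conjI[of "P' * Pi" _ "P * Pi'"])
    show "P' * Pi \<in> carrier_mat ?n ?n" "P * Pi' \<in> carrier_mat ?n ?n" using c by auto
    have "P' * Pi * (P * Pi') = P' * (Pi * P) * Pi'" using c by (simp add: assoc)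
    then show "P' * Pi * (P * Pi') = 1\<^sub>m ?n" using c PiP PiP' by simp
    have "P * Pi' * (P' * Pi) = P * (Pi' * P') * Pi" using c by (simp add: assoc)
    then show "P * Pi' * (P' * Pi) = 1\<^sub>m ?n" using c PiP PiP' by simp
    show "(P' * Pi)\<^sup>T * B * (P' * Pi) = B" by (rule isometry_of_equal_grams[OF c(1-3) B PiP(2) gram])
    have "P' * Pi * s = P' * D * Pi"
      using conj_by_inverse_mat[OF c(1,3) s c(5) PiP sP] c s by (simp add: assoc)
    then show "P' * Pi * s = t * (P' * Pi)" using c t by (simp add: assoc tP'[symmetric])
    have "det (P' * Pi) * det P = det P' * det (Pi * P)"
      using c by (simp add: det_mult[of _ ?n])
    then show "det (P' * Pi) = det (basis_mat m e' f') / det (basis_mat m e f)"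
      using PiP det_basis_mat_nonzero[OF h B BT] unfolding P_def P'_def by (simp add: field_simps)
  qed
qed

section \<open>Conjugacy classes in \<open>R\<^sub>\<Delta>\<close>\<close>

lemma count_mset_map_upt: "count (mset (map lam [0..<m])) mu = card {i. i < m \<and> lam i = mu}"
proof (induct m)
  case (Suc m)
  have "{i. i < Suc m \<and> lam i = mu}
      = (if lam m = mu then insert m {i. i < m \<and> lam i = mu} else {i. i < m \<and> lam i = mu})"
    by (auto simp: less_Suc_eq)
  then show ?case using Suc by simp
qed simp

lemma size_filter_map_upt: "size (mset (filter P (map lam [0..<m]))) = card {i. i < m \<and> P (lam i)}"
proof (induct m)
  case (Suc m)
  have "{i. i < Suc m \<and> P (lam i)}
      = (if P (lam m) then insert m {i. i < m \<and> P (lam i)} else {i. i < m \<and> P (lam i)})"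
    by (auto simp: less_Suc_eq)
  then show ?case using Suc by simp
qed simp

lemma permutation_matching_counts:
  fixes m :: nat
  assumes "\<And>mu. card {i. i < m \<and> lam i = mu} = card {i. i < m \<and> lam' i = mu}"
  obtains p where "p permutes {..<m}" "\<And>i. i < m \<Longrightarrow> lam' (p i) = lam i"
proof -
  have "mset (map lam [0..<m]) = mset (map lam' [0..<m])"
    by (rule multiset_eqI) (simp only: count_mset_map_upt assms)
  then obtain p where p: "p permutes {..<length (map lam' [0..<m])}"
    and pl: "permute_list p (map lam' [0..<m]) = map lam [0..<m]"
    by (rule mset_eq_permutation)
  then have p: "p permutes {..<m}" by simp
  have "lam' (p i) = lam i" if i: "i < m" for i
  proof -
    have "permute_list p (map lam' [0..<m]) ! i = map lam' [0..<m] ! p i"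
      using p i by (simp add: permute_list_nth)
    then show ?thesis using pl i permutes_in_image[OF p, of i] by simp
  qed
  then show ?thesis using p that by blast
qed

lemma even_size_if_fixpoint_free_involution:
  assumes "\<And>x. count M (\<phi> x) = count M x" and "\<And>x. \<phi> (\<phi> x) = x" and "\<And>x. x \<in># M \<Longrightarrow> \<phi> x \<noteq> x"
  shows "even (size M)"
  using assms
proof (induct "size M" arbitrary: M rule: less_induct)
  case less
  show ?case
  proof (cases "M = {#}")
    case False
    then obtain x where x: "x \<in># M" by blast
    have "count M (\<phi> x) > 0" using less(2)[of x] x by simp
    then have sub: "{#x, \<phi> x#} \<subseteq># M"
      using x less(4)[OF x] by (simp add: insert_subset_eq_iff in_diff_count)
    define M' where "M' = M - {#x, \<phi> x#}"
    have size: "size M = size M' + 2"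
      unfolding M'_def using sub size_mset_mono[OF sub] by (simp add: size_Diff_submset)
    have "even (size M')"
    proof (rule less(1))
      show "size M' < size M" using size by simp
      show "count M' (\<phi> y) = count M' y" for y
        unfolding M'_def using less(2)[of y] less(3)[of y] less(3)[of x] by auto
      show "\<phi> y \<noteq> y" if "y \<in># M'" for y
        using less(4) in_diffD[OF that[unfolded M'_def]] by blast
    qed (use less(3) in auto)
    then show ?thesis using size by simp
  qed simp
qed

locale R_Delta_setting =
  fixes N m :: nat and A :: "'k::field mat" and \<Delta> :: "'k poly" and S :: "'k set"
  assumes two: "(2::'k) \<noteq> 0" and N_eq: "N = 2 * m" and m_pos: "0 < m"
    and nondegenerate: "nondegenerate_qf N A" and degree_\<Delta>: "degree \<Delta> = N"
    and no_root_one: "mult_root \<Delta> 1 = 0" and no_root_minus_one: "mult_root \<Delta> (-1) = 0"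
    and mult_root_uminus: "\<And>l. l \<noteq> 0 \<Longrightarrow> mult_root \<Delta> (-l) = mult_root \<Delta> l"
    and transversal: "eigen_transversal S"
begin

definition B :: "'k mat" where
  "B = A + A\<^sup>T"

lemma A_carrier: "A \<in> carrier_mat N N"
  using nondegenerate unfolding nondegenerate_qf_def by simp

lemma B_carrier: "B \<in> carrier_mat N N"
  unfolding B_def using A_carrier by simp

lemma B_carrier_double: "B \<in> carrier_mat (2 * m) (2 * m)"
  using B_carrier N_eq by simp

lemma B_transpose: "B\<^sup>T = B"
  unfolding B_def using A_carrier by (intro eq_matI) auto

lemma bform_nondegenerate:
  assumes x: "x \<in> carrier_vec N" and "\<And>y. y \<in> carrier_vec N \<Longrightarrow> bform B x y = 0"
  shows "x = 0\<^sub>v N"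
  using nondegenerate assms polar_form_eq_bform[OF A_carrier x] unfolding nondegenerate_qf_def B_def by auto

lemma det_B_nonzero: "det B \<noteq> 0"
proof
  assume "det B = 0"
  then obtain v where v: "v \<in> carrier_vec N" "v \<noteq> 0\<^sub>v N" "B *\<^sub>v v = 0\<^sub>v N"
    using det_0_iff_vec_prod_zero_field[OF B_carrier] by blast
  have "bform B v y = 0" if y: "y \<in> carrier_vec N" for y
    using bform_sym[OF B_carrier B_transpose v(1) y] y v(3) unfolding bform_def by simp
  then show False using bform_nondegenerate v(1,2) by blast
qed

lemma SO_Q_carrier: "g \<in> SO_Q N A \<Longrightarrow> g \<in> carrier_mat N N"
  unfolding SO_Q_def by simp

lemma SO_Q_bform:
  assumes g: "g \<in> SO_Q N A" and x: "x \<in> carrier_vec N" and y: "y \<in> carrier_vec N"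
  shows "bform B (g *\<^sub>v x) (g *\<^sub>v y) = bform B x y"
proof -
  have g_carrier: "g \<in> carrier_mat N N"
    and q: "\<And>v. v \<in> carrier_vec N \<Longrightarrow> qform A (g *\<^sub>v v) = qform A v"
    using g unfolding SO_Q_def by auto
  have "polar_form A (g *\<^sub>v x) (g *\<^sub>v y) = polar_form A x y"
    unfolding polar_form_def using q[of "x + y"] q[OF x] q[OF y] g_carrier x y
    by (simp add: mult_add_distrib_mat_vec[OF g_carrier x y])
  then show ?thesis
    using polar_form_eq_bform[OF A_carrier] g_carrier x y unfolding B_def by simp
qed

lemma SO_Q_mult:
  assumes g: "g \<in> SO_Q N A" and h: "h \<in> SO_Q N A"
  shows "g * h \<in> SO_Q N A"
  using assms det_mult[OF SO_Q_carrier[OF g] SO_Q_carrier[OF h]] SO_Q_carrier[OF g] SO_Q_carrier[OF h]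
  unfolding SO_Q_def by (auto simp: assoc_mult_mat_vec[of _ N N _ N])

lemma isometry_in_SO_Q:
  assumes g: "g \<in> carrier_mat N N" and iso: "g\<^sup>T * B * g = B" and det: "det g = 1"
  shows "g \<in> SO_Q N A"
proof -
  have "qform A (g *\<^sub>v v) = qform A v" if v: "v \<in> carrier_vec N" for v
  proof -
    have "2 * qform A (g *\<^sub>v v) = 2 * qform A v"
      using bform_mult_mat_vec[OF B_carrier g v v] bform_add_transpose_diag[OF A_carrier]
        g v iso unfolding B_def by simp
    then show ?thesis using two by simp
  qed
  then show ?thesis unfolding SO_Q_def using g det by simp
qed

lemma det_isometric_conj:
  assumes "isometric_conj B N s t \<delta>"
  shows "\<delta> = 1 \<or> \<delta> = -1"
proof -
  obtain g g' where g: "g \<in> carrier_mat N N" and "g' \<in> carrier_mat N N"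
    "g * g' = 1\<^sub>m N" "g' * g = 1\<^sub>m N" and iso: "g\<^sup>T * B * g = B" and "g * s = t * g" and det: "det g = \<delta>"
    using assms by (rule isometric_conjE)
  have "det B = \<delta> * \<delta> * det B"
    using arg_cong[OF iso, of det] g B_carrier det by (simp add: det_mult[of _ N] det_transpose)
  then have "\<delta> * \<delta> = 1" using det_B_nonzero by simp
  then show ?thesis by (simp add: square_eq_1_iff)
qed

lemma self_in_conj_class: "s \<in> carrier_mat N N \<Longrightarrow> s \<in> conj_class N A s"
  unfolding conj_class_def SO_Q_def by (intro CollectI exI[of _ "1\<^sub>m N"]) auto

lemma R_Delta_conj_class_representative:
  assumes "is_conj_class N A X" and "X \<subseteq> R_Delta N A \<Delta>"
  obtains s where "s \<in> R_Delta N A \<Delta>" "X = conj_class N A s"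
  using assms self_in_conj_class SO_Q_carrier unfolding is_conj_class_def by blast

lemma conj_class_subset:
  assumes a: "a \<in> SO_Q N A" and a': "a' \<in> carrier_mat N N" and inv: "a * a' = 1\<^sub>m N" "a' * a = 1\<^sub>m N"
    and s: "s \<in> carrier_mat N N" and t: "t \<in> carrier_mat N N" and conj: "a * s = t * a"
  shows "conj_class N A t \<subseteq> conj_class N A s"
proof
  note assoc = assoc_mult_mat[of _ N N _ N _ N]
  have a_carrier: "a \<in> carrier_mat N N" by (rule SO_Q_carrier[OF a])
  have t_eq: "t = a * s * a'"
  proof -
    have "t = t * (a * a')" using inv t by simp
    also have "\<dots> = (t * a) * a'" using a_carrier a' t by (simp add: assoc)
    also have "\<dots> = a * s * a'" unfolding conj ..
    finally show ?thesis .
  qed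
  fix x assume "x \<in> conj_class N A t"
  then obtain g h where x: "x = g * t * h" and g: "g \<in> SO_Q N A" and h: "h \<in> carrier_mat N N"
    and gh: "g * h = 1\<^sub>m N" "h * g = 1\<^sub>m N" unfolding conj_class_def by auto
  note g_carrier = SO_Q_carrier[OF g]
  have "x = (g * a) * s * (a' * h)"
    unfolding x t_eq using g_carrier a_carrier a' h s by (simp add: assoc)
  moreover have "(g * a) * (a' * h) = 1\<^sub>m N"
  proof -
    have "(g * a) * (a' * h) = g * (a * a') * h" using g_carrier a_carrier a' h by (simp add: assoc)
    then show ?thesis using inv gh g_carrier by simp
  qed
  moreover have "(a' * h) * (g * a) = 1\<^sub>m N"
  proof -
    have "(a' * h) * (g * a) = a' * (h * g) * a" using g_carrier a_carrier a' h by (simp add: assoc)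
    then show ?thesis using inv gh a' by simp
  qed
  moreover have "g * a \<in> SO_Q N A" "a' * h \<in> carrier_mat N N"
    using SO_Q_mult[OF g a] a' h by auto
  ultimately show "x \<in> conj_class N A s"
    unfolding conj_class_def mem_Collect_eq by (intro exI conjI)
qed

lemma conj_class_eq_if_isometric_conj:
  assumes conj: "isometric_conj B N s t 1" and s: "s \<in> carrier_mat N N" and t: "t \<in> carrier_mat N N"
  shows "conj_class N A t = conj_class N A s"
proof -
  have sub: "conj_class N A v \<subseteq> conj_class N A u"
    if uv: "isometric_conj B N u v 1" and u: "u \<in> carrier_mat N N" and v: "v \<in> carrier_mat N N" for u v
  proof -
    obtain g g' where g: "g \<in> carrier_mat N N" and g': "g' \<in> carrier_mat N N"
      and inv: "g * g' = 1\<^sub>m N" "g' * g = 1\<^sub>m N"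
      and iso: "g\<^sup>T * B * g = B" and gu: "g * u = v * g" and det: "det g = 1"
      using uv by (rule isometric_conjE)
    show ?thesis by (rule conj_class_subset[OF isometry_in_SO_Q[OF g iso det] g' inv u v gu])
  qed
  have "isometric_conj B N t s 1"
    using isometric_conj_sym[OF conj B_carrier s t] by simp
  then show ?thesis using sub[OF conj s t] sub[of t s] s t by (intro equalityI) simp_all
qed

lemma uminus_conj_class:
  assumes s: "s \<in> carrier_mat N N"
  shows "(\<lambda>c. - c) ` conj_class N A s = conj_class N A (- s)"
proof -
  have key: "- (g * s * h) = g * (- s) * h" if "g \<in> SO_Q N A" "h \<in> carrier_mat N N" for g h
    using SO_Q_carrier[OF that(1)] that(2) s by (simp add: uminus_mult_right_mat uminus_mult_left_mat)
  show ?thesis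
  proof
    show "(\<lambda>c. - c) ` conj_class N A s \<subseteq> conj_class N A (- s)"
      unfolding conj_class_def using key by blast
    show "conj_class N A (- s) \<subseteq> (\<lambda>c. - c) ` conj_class N A s"
    proof
      fix x assume "x \<in> conj_class N A (- s)"
      then obtain g h where x: "x = g * (- s) * h" and g: "g \<in> SO_Q N A" and h: "h \<in> carrier_mat N N"
        and gh: "g * h = 1\<^sub>m N" "h * g = 1\<^sub>m N" unfolding conj_class_def by auto
      then have "x = - (g * s * h)" and "g * s * h \<in> conj_class N A s"
        using key[OF g h] unfolding conj_class_def by auto
      then show "x \<in> (\<lambda>c. - c) ` conj_class N A s" by blast
    qed
  qed
qed

lemma R_DeltaD:
  assumes "s \<in> R_Delta N A \<Delta>"
  shows "s \<in> SO_Q N A" "semisimple s" "Delta_of s = \<Delta>" "s \<in> carrier_mat N N"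
  using assms unfolding R_Delta_def SO_Q_def by auto

lemma eigsp_dim_R_Delta:
  assumes "s \<in> R_Delta N A \<Delta>" and "mu \<noteq> 0"
  shows "eigsp_dim s mu = mult_root \<Delta> mu"
  using mult_root_Delta_of[of s mu] R_DeltaD(3)[OF assms(1)] degree_\<Delta> N_eq m_pos assms(2) by simp

lemma R_Delta_hyperbolic_basis:
  assumes sR: "s \<in> R_Delta N A \<Delta>"
  obtains e f lam where "hyperbolic_system B s N m e f lam" "\<forall>i<m. lam i \<in> S"
proof -
  note s = R_DeltaD[OF sR]
  obtain d where sim: "similar_mat s (mat_diag N d)"
    using semisimple_similar_mat_diag[OF s(2,4)] by blast
  then obtain n Q Qi where c: "{s, mat_diag N d, Q, Qi} \<subseteq> carrier_mat n n"
    and QQi: "Q * Qi = 1\<^sub>m n" and QiQ: "Qi * Q = 1\<^sub>m n" and s_eq: "s = Q * mat_diag N d * Qi"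
    using similar_matD by blast
  have n: "n = N" using c s(4) by auto
  have Q: "Q \<in> carrier_mat N N" and Qi: "Qi \<in> carrier_mat N N" using c n by auto
  have "s * Q = Q * mat_diag N d * (Qi * Q)"
    unfolding s_eq by (rule assoc_mult_mat[of _ N N _ N _ N]) (use Q Qi in auto)
  then have sQ: "s * Q = Q * mat_diag N d"
    using QiQ Q n right_mult_one_mat[of "Q * mat_diag N d" N N] by simp
  have eigenvalues: "d j \<notin> {0, 1, -1}" if j: "j < N" for j
  proof -
    have "(\<Prod>j<N. d j) = 1"
      using det_similar[OF sim] s(1) unfolding det_mat_diag SO_Q_def by simp
    then have "d j \<noteq> 0" using j prod_zero_iff[of "{..<N}" d] by auto
    moreover have "card {j. j < N \<and> d j = mu} = 0" if "mu = 1 \<or> mu = -1" for mu :: 'k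
      using eigsp_dim_similar_mat_diag[OF sim, of mu] eigsp_dim_R_Delta[OF sR, of mu]
        no_root_one no_root_minus_one that by auto
    ultimately show ?thesis using j by (auto simp: card_eq_0_iff)
  qed
  interpret hyperbolic_basis_construction N m B s Q Qi d S
  proof
    show "\<And>x y. x \<in> carrier_vec N \<Longrightarrow> y \<in> carrier_vec N \<Longrightarrow> bform B (s *\<^sub>v x) (s *\<^sub>v y) = bform B x y"
      by (rule SO_Q_bform[OF s(1)])
  qed (use N_eq B_carrier B_transpose s(4) Q Qi QQi n sQ bform_nondegenerate eigenvalues transversal
      in simp_all)
  show ?thesis using hyperbolic_basis_exists that by blast
qed

lemma card_eigenvalue_R_Delta:
  assumes sR: "s \<in> R_Delta N A \<Delta>" and h: "hyperbolic_system B s N m e f lam" and lS: "\<forall>i<m. lam i \<in> S"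
  shows "card {i. i < m \<and> lam i = mu} = (if mu \<in> S then mult_root \<Delta> mu else 0)"
proof (cases "mu \<in> S")
  case True
  have "inverse (lam i) \<noteq> mu" if "i < m" for i
    using eigen_transversal_inverse_notin[OF transversal] lS that True by blast
  then have "eigsp_dim s mu = card {i. i < m \<and> lam i = mu}"
    using eigsp_dim_hyperbolic_system[of B s m e f lam] h B_carrier_double B_transpose R_DeltaD(4)[OF sR] N_eq
    by simp
  then show ?thesis
    using eigsp_dim_R_Delta[OF sR] True eigen_transversal_nontrivial[OF transversal] by auto
next
  case False
  then show ?thesis using lS by auto
qed

lemma R_Delta_isometric_conj_bases:
  assumes sR: "s \<in> R_Delta N A \<Delta>" and h: "hyperbolic_system B s N m e f lam" and lS: "\<forall>i<m. lam i \<in> S"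
    and tR: "t \<in> R_Delta N A \<Delta>" and h': "hyperbolic_system B t N m e' f' lam'" and lS': "\<forall>i<m. lam' i \<in> S"
  shows "isometric_conj B N s t (det (basis_mat m e' f') / det (basis_mat m e f))"
proof -
  have "card {i. i < m \<and> lam i = mu} = card {i. i < m \<and> lam' i = mu}" for mu
    unfolding card_eigenvalue_R_Delta[OF sR h lS] card_eigenvalue_R_Delta[OF tR h' lS'] ..
  then obtain p where p: "p permutes {..<m}" and match: "\<And>i. i < m \<Longrightarrow> lam' (p i) = lam i"
    using permutation_matching_counts by blast
  have h2: "hyperbolic_system B s (2 * m) m e f lam" and h2': "hyperbolic_system B t (2 * m) m e' f' lam'"
    using h h' N_eq by simp_all
  note hp = hyperbolic_system_permute[OF h2' p]
  have "isometric_conj B (2 * m) s t (det (basis_mat m (e' \<circ> p) (f' \<circ> p)) / det (basis_mat m e f))"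
    by (rule hyperbolic_systems_isometric_conj[OF h2 hp(1) _ B_carrier_double B_transpose])
      (use match R_DeltaD(4)[OF sR] R_DeltaD(4)[OF tR] N_eq in auto)
  then show ?thesis unfolding hp(2) N_eq .
qed

lemma R_Delta_isometric_conj:
  assumes "s \<in> R_Delta N A \<Delta>" and "t \<in> R_Delta N A \<Delta>"
  obtains \<delta> where "isometric_conj B N s t \<delta>"
proof -
  obtain e f lam where "hyperbolic_system B s N m e f lam" "\<forall>i<m. lam i \<in> S"
    using R_Delta_hyperbolic_basis[OF assms(1)] .
  moreover obtain e' f' lam' where "hyperbolic_system B t N m e' f' lam'" "\<forall>i<m. lam' i \<in> S"
    using R_Delta_hyperbolic_basis[OF assms(2)] .
  ultimately show ?thesis using R_Delta_isometric_conj_bases[OF assms(1) _ _ assms(2)] that by blast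
qed

lemma uminus_R_Delta:
  assumes sR: "s \<in> R_Delta N A \<Delta>"
  shows "- s \<in> R_Delta N A \<Delta>"
proof -
  note s = R_DeltaD[OF sR]
  obtain d where sim: "similar_mat s (mat_diag N d)"
    using semisimple_similar_mat_diag[OF s(2,4)] by blast
  note sim' = similar_mat_diag_uminus[OF sim]
  have "- s = (-1) \<cdot>\<^sub>m s" by (intro eq_matI) auto
  moreover have "dim_col s = 2 * m" using s(4) N_eq by simp
  ultimately have "det (- s) = 1"
    using s(1) unfolding SO_Q_def by (simp add: power_mult)
  moreover have "qform A ((- s) *\<^sub>v v) = qform A v" if v: "v \<in> carrier_vec N" for v
    using s(1,4) v qform_uminus[OF A_carrier, of "s *\<^sub>v v"] unfolding SO_Q_def by simp
  ultimately have "- s \<in> SO_Q N A" using s(4) unfolding SO_Q_def by simp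
  moreover have "semisimple (- s)"
    using sim' unfolding semisimple_def diagonal_mat_def mat_diag_def by fastforce
  moreover have "eigsp_dim (- s) l = eigsp_dim s l" if "l \<noteq> 0" for l
  proof -
    have "eigsp_dim (- s) l = eigsp_dim s (- l)"
      using eigsp_dim_similar_mat_diag[OF sim'] eigsp_dim_similar_mat_diag[OF sim]
      by (simp add: minus_equation_iff eq_commute[of "- l"])
    then show ?thesis using eigsp_dim_R_Delta[OF sR] mult_root_uminus that by simp
  qed
  then have "Delta_of (- s) = \<Delta>"
    unfolding s(3)[symmetric] Delta_of_def by (intro prod.cong) auto
  ultimately show ?thesis unfolding R_Delta_def by simp
qed

text \<open>The eigenvalues with \<open>\<lambda>\<^sup>2 \<noteq> -1\<close> pair off as \<open>\<lambda>, -\<lambda>\<close>: both lie in \<open>S\<close> and have the same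
  multiplicity in \<open>\<Delta>\<close>.\<close>

lemma even_card_square_neq_minus_one:
  assumes sR: "s \<in> R_Delta N A \<Delta>" and h: "hyperbolic_system B s N m e f lam" and lS: "\<forall>i<m. lam i \<in> S"
  shows "even (card {i. i < m \<and> lam i * lam i \<noteq> -1})"
proof -
  define M where "M = mset (filter (\<lambda>x. x * x \<noteq> -1) (map lam [0..<m]))"
  have count_M: "count M mu = (if mu * mu \<noteq> -1 then card {i. i < m \<and> lam i = mu} else 0)" for mu
    unfolding M_def mset_filter count_filter_mset count_mset_map_upt by simp
  have "count M (- x) = count M x" for x
  proof (cases "x * x = -1")
    case False
    then have "- x \<in> S \<longleftrightarrow> x \<in> S"
      using eigen_transversal_uminus[OF transversal, of x] eigen_transversal_uminus[OF transversal, of "- x"]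
      by auto
    moreover have "x \<in> S \<Longrightarrow> mult_root \<Delta> (- x) = mult_root \<Delta> x"
      using mult_root_uminus eigen_transversal_nontrivial[OF transversal] by blast
    ultimately show ?thesis
      unfolding count_M card_eigenvalue_R_Delta[OF sR h lS] using False by auto
  qed (simp add: count_M)
  moreover have "- x \<noteq> x" if "x \<in># M" for x
  proof -
    have "x \<in> S" using that lS unfolding M_def by auto
    then show ?thesis
      using neq_uminus_self[OF two] eigen_transversal_nontrivial[OF transversal] by fastforce
  qed
  ultimately have "even (size M)"
    by (intro even_size_if_fixpoint_free_involution[of M uminus]) auto
  then show ?thesis unfolding M_def size_filter_map_upt .
qed

lemma isometric_conj_uminus:
  assumes sR: "s \<in> R_Delta N A \<Delta>"
  shows "isometric_conj B N s (- s) ((-1) ^ m)"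
proof -
  obtain e f lam where h: "hyperbolic_system B s N m e f lam" and lS: "\<forall>i<m. lam i \<in> S"
    using R_Delta_hyperbolic_basis[OF sR] .
  define T where "T = {i. i < m \<and> lam i * lam i = -1}"
  define lam' where "lam' i = (if i \<in> T then inverse (- lam i) else - lam i)" for i
  have "hyperbolic_system B (- s) (2 * m) m e f (\<lambda>i. - lam i)"
    using hyperbolic_system_uminus[of B s N m e f lam] h R_DeltaD(4)[OF sR] N_eq by simp
  then obtain e' f' where h': "hyperbolic_system B (- s) (2 * m) m e' f' lam'"
    and det': "det (basis_mat m e' f') = (-1) ^ card T * det (basis_mat m e f)"
    using hyperbolic_system_swap_set[of B "- s" m e f _ T] B_carrier_double B_transpose
    unfolding lam'_def T_def by auto
  have "lam' i \<in> S" if i: "i < m" for i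
  proof (cases "i \<in> T")
    case True
    then have "inverse (lam i) = - lam i"
      using inverse_eq_uminus_iff eigen_transversal_nontrivial[OF transversal] lS i unfolding T_def by auto
    then show ?thesis using True lS i unfolding lam'_def by (simp add: inverse_minus_eq)
  next
    case False
    then show ?thesis using eigen_transversal_uminus[OF transversal] lS i unfolding lam'_def T_def by auto
  qed
  then have "isometric_conj B N s (- s) (det (basis_mat m e' f') / det (basis_mat m e f))"
    using R_Delta_isometric_conj_bases[OF sR h lS uminus_R_Delta[OF sR]] h' N_eq by simp
  moreover have "det (basis_mat m e f) \<noteq> 0"
    using det_basis_mat_nonzero[of B s m e f lam] h N_eq B_carrier_double B_transpose by simp
  moreover have "(-1) ^ card T = ((-1) ^ m :: 'k)"
  proof -
    let ?U = "{i. i < m \<and> lam i * lam i \<noteq> -1}"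
    have "card T + card ?U = card (T \<union> ?U)" by (rule card_Un_disjoint[symmetric]) (auto simp: T_def)
    also have "T \<union> ?U = {..<m}" by (auto simp: T_def)
    finally have "(-1) ^ m = (-1) ^ card T * ((-1) ^ card ?U :: 'k)" by (simp add: power_add[symmetric])
    then show ?thesis using even_card_square_neq_minus_one[OF sR h lS] by simp
  qed
  ultimately show ?thesis using det' by simp
qed

lemma uminus_conj_class_if_even:
  assumes sR: "s \<in> R_Delta N A \<Delta>" and "even m"
  shows "(\<lambda>c. - c) ` conj_class N A s = conj_class N A s"
proof -
  note s = R_DeltaD(4)[OF sR]
  have "isometric_conj B N s (- s) 1" using isometric_conj_uminus[OF sR] \<open>even m\<close> by simp
  then have "conj_class N A (- s) = conj_class N A s"
    by (rule conj_class_eq_if_isometric_conj[OF _ s]) (use s in simp)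
  then show ?thesis unfolding uminus_conj_class[OF s] .
qed

lemma uminus_conj_class_if_odd:
  assumes sR: "s \<in> R_Delta N A \<Delta>" and tR: "t \<in> R_Delta N A \<Delta>" and "odd m"
    and ne: "conj_class N A s \<noteq> conj_class N A t"
  shows "conj_class N A t = (\<lambda>c. - c) ` conj_class N A s"
proof -
  note s = R_DeltaD(4)[OF sR] and t = R_DeltaD(4)[OF tR]
  obtain \<delta> where st: "isometric_conj B N s t \<delta>" using R_Delta_isometric_conj[OF sR tR] .
  have "\<delta> \<noteq> 1"
  proof
    assume "\<delta> = 1"
    then have "conj_class N A t = conj_class N A s"
      using conj_class_eq_if_isometric_conj[OF _ s t] st by simp
    with ne show False by simp
  qed
  then have "\<delta> = -1" using det_isometric_conj[OF st] by simp
  then have "isometric_conj B N t s (-1)" using isometric_conj_sym[OF st B_carrier s t] by simp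
  moreover have "isometric_conj B N s (- s) (-1)" using isometric_conj_uminus[OF sR] \<open>odd m\<close> by simp
  ultimately have "isometric_conj B N t (- s) ((-1) * (-1))"
    by (rule isometric_conj_trans[OF _ _ B_carrier t s]) (use s in simp)
  then have "conj_class N A (- s) = conj_class N A t"
    by (intro conj_class_eq_if_isometric_conj[OF _ t]) (use s in simp_all)
  then show ?thesis unfolding uminus_conj_class[OF s] by simp
qed

end

theorem mainTheorem16:
  fixes N :: nat and A :: "'k::alg_closed_field mat" and \<Delta> :: "'k poly"
    and C C' :: "'k mat set"
  assumes "odd CHAR('k)"
    and "even N" and "N \<ge> 2"
    and "nondegenerate_qf N A"
    and "\<Delta> \<in> frakA0 N"
    and "\<forall>l::'k. l \<noteq> 0 \<longrightarrow> mult_root \<Delta> (-l) = mult_root \<Delta> l"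
    and "is_conj_class N A C" and "is_conj_class N A C'"
    and "C \<subseteq> R_Delta N A \<Delta>" and "C' \<subseteq> R_Delta N A \<Delta>"
    and "C \<noteq> C'"
  shows "(N mod 4 = 2 \<longrightarrow> C' = (\<lambda>c. - c) ` C) \<and>
         (N mod 4 = 0 \<longrightarrow> (\<lambda>c. - c) ` C = C \<and> (\<lambda>c. - c) ` C' = C')"
proof -
  have two: "(2::'k) \<noteq> 0" by (rule two_neq_zero_if_odd_char[OF assms(1)])
  obtain S :: "'k set" where S: "eigen_transversal S" using eigen_transversal_exists[OF two] .
  obtain m where N: "N = 2 * m" using assms(2) by blast
  interpret R_Delta_setting N m A \<Delta> S
    using two N assms(3-6) S unfolding frakA0_def by unfold_locales auto
  obtain s where sR: "s \<in> R_Delta N A \<Delta>" and C: "C = conj_class N A s"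
    using R_Delta_conj_class_representative[OF assms(7,9)] .
  obtain t where tR: "t \<in> R_Delta N A \<Delta>" and C': "C' = conj_class N A t"
    using R_Delta_conj_class_representative[OF assms(8,10)] .
  show ?thesis
  proof (intro conjI impI)
    assume "N mod 4 = 2"
    then have "odd m" using N by presburger
    then show "C' = (\<lambda>c. - c) ` C"
      using uminus_conj_class_if_odd[OF sR tR] assms(11) unfolding C C' by simp
  next
    assume "N mod 4 = 0"
    then have "even m" using N by presburger
    then show "(\<lambda>c. - c) ` C = C" "(\<lambda>c. - c) ` C' = C'"
      unfolding C C' using uminus_conj_class_if_even sR tR by simp_all
  qed
qed

end
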